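(* Let $E$ be an elliptic curve over $\mathbb{F}_q(T)$ with minimal Weierstrass equation $y^2=x^3+Ax+B$ and discriminant $\Delta$. For any prime $P$, $$\frac{|\mathcal{H}^{\pm}_N(P\Delta)|}{|\mathcal{H}^{\pm}_N(\Delta)|}=\begin{cases}\frac{|P|}{|P|+1}+O(q^{-N/2}) & P\nmid\Delta,\\ 1 & P\mid\Delta.\end{cases}$$
   Context: Fix a prime $p\neq2,3$ and $q=p^m$ with $q\equiv1\pmod 6$; primes are monic irreducible polynomials in $\mathbb{F}_q[T]$, $|P|=q^{\deg P}$. $\Delta=4A^3+27B^2$; $M$ is the product of the primes of multiplicative reduction of $E$ and $\epsilon(E)\in\{\pm1\}$ is its root number. For $G\in\mathbb{F}_q[T]$, $\mathcal{H}_N(G)$ is the set of monic square-free $D\in\mathbb{F}_q[T]$ of degree $N$ coprime to $G$, and $\mathcal{H}^{\pm}_N(G)=\{D\in\mathcal{H}_N(G):\chi_D(M)=\pm\epsilon_N\epsilon(E)\}$, where $\chi_D=(\frac{D}{\cdot})$ is the quadratic residue (Kronecker) symbol and $\epsilon_N\in\{\pm1\}$ is the sign depending only on $N$ for which the root number of the quadratic twist $E_D:y^2=x^3+AD^2x+BD^3$ equals $\epsilon_N\epsilon(E)\chi_D(M)$ for all $D\in\mathcal{H}_N(\Delta)$. The family $\mathcal{H}^{\pm}_N(\Delta)$ is assumed non-empty. Implied constants may depend on $E$. *)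

theory Defs
  imports "HOL-Computational_Algebra.Computational_Algebra" "HOL-Library.Cardinality" Complex_Main
begin

definition fprime :: "'a::field poly \<Rightarrow> bool" where
  "fprime P \<longleftrightarrow> lead_coeff P = 1 \<and> irreducible P"

definition pnorm :: "'a::{finite,field} poly \<Rightarrow> nat" where
  "pnorm P = CARD('a) ^ degree P"

definition disc :: "'a::field poly \<Rightarrow> 'a poly \<Rightarrow> 'a poly" where
  "disc A B = 4 * A ^ 3 + 27 * B ^ 2"

text \<open>Minimality of the Weierstrass model y^2 = x^3 + Ax + B at every prime
  (characteristic not 2,3): no prime P with P^4 | A and P^6 | B.\<close>
definition minimal_weierstrass :: "'a::field poly \<Rightarrow> 'a poly \<Rightarrow> bool" where
  "minimal_weierstrass A B \<longleftrightarrow> (\<forall>P. fprime P \<longrightarrow> \<not> (P ^ 4 dvd A \<and> P ^ 6 dvd B))"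

text \<open>Primes of multiplicative reduction for a minimal model (char not 2,3):
  P divides the discriminant but not c4 = -48A, i.e. not A.\<close>
definition mult_primes :: "'a::field poly \<Rightarrow> 'a poly \<Rightarrow> 'a poly set" where
  "mult_primes A B = {P. fprime P \<and> P dvd disc A B \<and> \<not> P dvd A}"

definition qr_symbol :: "'a::field poly \<Rightarrow> 'a poly \<Rightarrow> int" where
  "qr_symbol D P = (if P dvd D then 0
     else if (\<exists>x. P dvd (x ^ 2 - D)) then 1 else -1)"

text \<open>chi_D(M), M the (squarefree) product of the multiplicative primes:
  by multiplicativity in the lower argument it is the product of the
  symbols (D/P) over these primes.\<close>
definition chiM :: "'a::field poly \<Rightarrow> 'a poly \<Rightarrow> 'a poly \<Rightarrow> int" where
  "chiM A B D = (\<Prod>P\<in>mult_primes A B. qr_symbol D P)"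

definition HN :: "nat \<Rightarrow> 'a::field poly \<Rightarrow> 'a poly set" where
  "HN N G = {D. lead_coeff D = 1 \<and> degree D = N \<and> squarefree D \<and> coprime D G}"

text \<open>H^{pm}_N(G) with the prescribed sign s = pm eps_N eps(E) in {1,-1}.\<close>
definition HNs :: "'a::field poly \<Rightarrow> 'a poly \<Rightarrow> int \<Rightarrow> nat \<Rightarrow> 'a poly \<Rightarrow> 'a poly set" where
  "HNs A B s N G = {D \<in> HN N G. chiM A B D = s}"

end

theory Submission
  imports Defs
begin

text \<open>
  Let G be the monic associate of the discriminant. Every prime of multiplicative reduction
  divides G, so \<chi>_D(M) depends only on D mod G, and both families are unions of residue
  classes D = r (mod G) with r prime to G. In every such class, inclusion-exclusion over the
  primes whose squares divide D shows that the number S_N(r) of monic squarefree D of degree N is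
  \<kappa> q^N + O(q^(N/2)), with a density \<kappa> independent of r; and \<kappa> > 0, since every monic
  polynomial is A^2 E with E squarefree.

  For a prime P not dividing G, the squarefree D divisible by P are the P D' with D' squarefree,
  prime to P and in the class of r / P. Hence the number T_N(r) of squarefree D prime to P
  satisfies T_N(r) = S_N(r) - T_(N - deg P)(r / P), which unrolls to
  T_N(r) = \<kappa> q^N |P| / (|P| + 1) + O(q^(N/2)). Summing over the admissible classes and dividing
  gives the first case. If P divides the discriminant, being prime to P times the discriminant is
  the same as being prime to the discriminant, so the two families coincide.
\<close>

section \<open>Monic irreducible polynomials\<close>

lemma fprime_nonzero: "fprime P \<Longrightarrow> P \<noteq> 0"
  by (auto simp: fprime_def)

lemma fprime_not_unit: "fprime P \<Longrightarrow> \<not> is_unit P"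
  by (auto simp: fprime_def irreducible_def)

lemma fprime_imp_prime_elem: "fprime (P :: 'a::field poly) \<Longrightarrow> prime_elem P"
  by (auto simp: fprime_def intro: field_poly_irreducible_imp_prime)

lemma degree_fprime_pos: "fprime (P :: 'a::field poly) \<Longrightarrow> 0 < degree P"
  using fprime_nonzero fprime_not_unit is_unit_iff_degree by blast

lemma fprime_dvd_mult_iff: "fprime (P :: 'a::field poly) \<Longrightarrow> P dvd a * b \<longleftrightarrow> P dvd a \<or> P dvd b"
  by (simp add: fprime_imp_prime_elem prime_elem_dvd_mult_iff)

lemma fprime_dvd_prod_iff:
  fixes P :: "'a::field poly"
  assumes "fprime P" "finite S"
  shows "P dvd (\<Prod>x\<in>S. f x) \<longleftrightarrow> (\<exists>x\<in>S. P dvd f x)"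
  using assms(2)
  by (induction S rule: finite_induct) (auto simp: fprime_dvd_mult_iff[OF assms(1)] fprime_not_unit[OF assms(1)])

lemma fprime_dvd_fprime_iff:
  fixes P Q :: "'a::field poly"
  assumes "fprime P" "fprime Q"
  shows "P dvd Q \<longleftrightarrow> P = Q"
proof
  assume "P dvd Q"
  then obtain k where k: "Q = P * k" ..
  with assms have "is_unit k"
    using irreducibleD fprime_not_unit by (metis fprime_def)
  then obtain c where "k = [:c:]"
    by (metis is_unit_iff_degree degree_eq_zeroE not_is_unit_0)
  with k assms show "P = Q"
    by (cases "c = 0") (auto simp: fprime_def)
qed simp

lemma fprime_divisor_exists:
  fixes p :: "'a::field poly"
  assumes "p \<noteq> 0" "\<not> is_unit p"
  obtains P where "fprime P" "P dvd p"
  using assms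
proof (induction "degree p" arbitrary: p rule: less_induct)
  case less
  show ?case
  proof (cases "irreducible p")
    case True
    let ?c = "inverse (lead_coeff p)"
    have "irreducible (smult ?c p)"
      using True less.prems irreducible_mult_unit_left[of "[:?c:]" p] by (simp add: is_unit_triv)
    moreover have "p = smult ?c p * [:lead_coeff p:]"
      using less.prems by simp
    then have "smult ?c p dvd p"
      by (rule dvdI)
    ultimately show ?thesis
      using less.prems by (intro less.prems(1)[of "smult ?c p"]) (auto simp: fprime_def)
  next
    case False
    then obtain a b where ab: "p = a * b" "\<not> is_unit a" "\<not> is_unit b"
      using less.prems irreducibleI by metis
    with less.prems have "a \<noteq> 0" "b \<noteq> 0"
      by auto
    with ab have "degree a < degree p"
      by (simp add: degree_mult_eq is_unit_iff_degree)
    with ab \<open>a \<noteq> 0\<close> show ?thesis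
      by (metis less.hyps less.prems(1) dvd_mult2)
  qed
qed

lemma coprime_iff_no_fprime_divisor:
  fixes a b :: "'a::field poly"
  shows "coprime a b \<longleftrightarrow> (\<forall>P. fprime P \<longrightarrow> \<not> (P dvd a \<and> P dvd b))"
proof
  assume "coprime a b"
  then show "\<forall>P. fprime P \<longrightarrow> \<not> (P dvd a \<and> P dvd b)"
    using fprime_not_unit coprime_common_divisor by blast
next
  assume no_common: "\<forall>P. fprime P \<longrightarrow> \<not> (P dvd a \<and> P dvd b)"
  show "coprime a b"
  proof (rule coprimeI, rule ccontr)
    fix c assume c: "c dvd a" "c dvd b" "\<not> is_unit c"
    \<comment> \<open>If c = 0 then a = b = 0, and T is a common prime divisor.\<close>
    have "fprime [:0, 1 :: 'a:]"
      by (simp add: fprime_def irreducible_linear_field_poly)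
    then obtain P where "fprime P" "P dvd c"
      using fprime_divisor_exists[of c] by (cases "c = 0") (auto simp: c(3))
    with c no_common show False
      by (meson dvd_trans)
  qed
qed

lemma coprime_fprime_left_iff:
  fixes P a :: "'a::field poly"
  assumes "fprime P"
  shows "coprime P a \<longleftrightarrow> \<not> P dvd a"
  using assms by (auto simp: coprime_iff_no_fprime_divisor fprime_dvd_fprime_iff dest: fprime_not_unit)

lemma poly_coprime_mult_left_iff:
  fixes a b c :: "'a::field poly"
  shows "coprime (a * b) c \<longleftrightarrow> coprime a c \<and> coprime b c"
  by (auto simp: coprime_iff_no_fprime_divisor fprime_dvd_mult_iff)

lemma poly_coprime_mult_right_iff:
  fixes a b c :: "'a::field poly"
  shows "coprime a (b * c) \<longleftrightarrow> coprime a b \<and> coprime a c"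
  using poly_coprime_mult_left_iff[of b c a] by (simp add: coprime_commute)

lemma poly_coprime_prod_left_iff:
  fixes c :: "'a::field poly"
  assumes "finite S"
  shows "coprime (\<Prod>x\<in>S. f x) c \<longleftrightarrow> (\<forall>x\<in>S. coprime (f x) c)"
  using assms by (induction S rule: finite_induct) (auto simp: poly_coprime_mult_left_iff)

lemma poly_bezout:
  fixes a b :: "'a::field poly"
  assumes "coprime a b"
  obtains u v where "u * a + v * b = 1"
proof -
  define I where "I = {h. h \<noteq> 0 \<and> (\<exists>u v. h = u * a + v * b)}"
  have "a \<noteq> 0 \<or> b \<noteq> 0"
    using assms by auto
  moreover have "a = 1 * a + 0 * b" "b = 0 * a + 1 * b"
    by simp_all
  ultimately have "I \<noteq> {}"
    unfolding I_def by blast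
  then obtain g where "g \<in> I" and g_min: "\<And>h. h \<in> I \<Longrightarrow> degree g \<le> degree h"
    using ex_has_least_nat[of "\<lambda>h. h \<in> I" _ degree] by blast
  then obtain u v where g: "g = u * a + v * b" "g \<noteq> 0"
    unfolding I_def by auto
  have g_dvd: "g dvd x" if "x = u' * a + v' * b" for x u' v'
  proof (rule ccontr)
    assume "\<not> g dvd x"
    then have "x mod g \<noteq> 0" "degree (x mod g) < degree g"
      using g(2) by (auto simp: degree_mod_less_degree mod_eq_0_iff_dvd)
    moreover have "x mod g = (u' - x div g * u) * a + (v' - x div g * v) * b"
      using that g(1) by (simp add: minus_div_mult_eq_mod[symmetric] algebra_simps)
    ultimately show False
      using g_min[of "x mod g"] unfolding I_def by auto
  qed
  have "g dvd a" "g dvd b"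
    by (rule g_dvd[of _ 1 0]; simp) (rule g_dvd[of _ 0 1]; simp)
  with assms have "is_unit g"
    by (rule coprime_common_divisor)
  then obtain c where "g = [:c:]" "c \<noteq> 0"
    using g(2) is_unit_iff_degree degree_eq_zeroE by (metis pCons_0_0)
  then have "smult (inverse c) g = 1"
    by simp
  with g(1) show ?thesis
    by (intro that[of "smult (inverse c) u" "smult (inverse c) v"]) (simp add: smult_add_right)
qed

lemma inverse_mod_exists:
  fixes A G :: "'a::field poly"
  assumes "coprime A G"
  obtains B where "(B * A) mod G = 1 mod G"
proof -
  obtain u v where "u * A + v * G = 1"
    using assms by (rule poly_bezout)
  then have "(u * A) mod G = 1 mod G"
    using mod_mult_self1[of "u * A" v G] by simp
  then show ?thesis
    by (rule that)
qed

lemma squarefree_iff_no_fprime_square: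
  fixes D :: "'a::field poly"
  assumes "D \<noteq> 0"
  shows "squarefree D \<longleftrightarrow> (\<forall>P. fprime P \<longrightarrow> \<not> P ^ 2 dvd D)"
proof
  assume no_square: "\<forall>P. fprime P \<longrightarrow> \<not> P ^ 2 dvd D"
  show "squarefree D"
  proof (rule squarefreeI, rule ccontr)
    fix x assume x: "x ^ 2 dvd D" "\<not> is_unit x"
    with assms have "x \<noteq> 0"
      by auto
    with x obtain P where "fprime P" "P dvd x"
      using fprime_divisor_exists by blast
    with x no_square show False
      using dvd_power_same dvd_trans by blast
  qed
qed (auto simp: squarefree_def dest: fprime_not_unit)

lemma fprime_square_dvd_mult_cancel:
  fixes P a b :: "'a::field poly"
  assumes "fprime P" "\<not> P dvd a" "P ^ 2 dvd a * b"
  shows "P ^ 2 dvd b"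
proof -
  have "P dvd a * b"
    using assms(3) by (rule dvd_trans[rotated]) (simp add: power2_eq_square)
  with assms(1,2) obtain c where c: "b = P * c"
    by (auto simp: fprime_dvd_mult_iff elim: dvdE)
  with assms(3) fprime_nonzero[OF assms(1)] have "P dvd a * c"
    by (simp add: power2_eq_square mult.left_commute)
  with assms(1,2) c show ?thesis
    by (auto simp: fprime_dvd_mult_iff power2_eq_square)
qed

lemma monic_square_times_squarefree:
  fixes D :: "'a::field poly"
  assumes "lead_coeff D = 1"
  shows "\<exists>A E. lead_coeff A = 1 \<and> lead_coeff E = 1 \<and> squarefree E \<and> D = A ^ 2 * E"
  using assms
proof (induction "degree D" arbitrary: D rule: less_induct)
  case less
  show ?case
  proof (cases "squarefree D")
    case True
    with less.prems show ?thesis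
      by (intro exI[of _ 1] exI[of _ D]) simp
  next
    case False
    with less.prems obtain P where P: "fprime P" "P ^ 2 dvd D"
      using squarefree_iff_no_fprime_square by (metis leading_coeff_0_iff zero_neq_one)
    from P(2) obtain D' where D': "D = P ^ 2 * D'" ..
    have "lead_coeff P = 1"
      using P(1) by (simp add: fprime_def)
    with less.prems D' have "lead_coeff D' = 1" "D' \<noteq> 0"
      by (auto simp: lead_coeff_mult lead_coeff_power)
    with D' P(1) have "degree D' < degree D"
      by (simp add: degree_mult_eq degree_power_eq fprime_nonzero degree_fprime_pos)
    with less.hyps \<open>lead_coeff D' = 1\<close> obtain A E where
      "lead_coeff A = 1" "lead_coeff E = 1" "squarefree E" "D' = A ^ 2 * E" by blast
    with D' \<open>lead_coeff P = 1\<close> show ?thesis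
      by (intro exI[of _ "P * A"] exI[of _ E]) (simp add: lead_coeff_mult power_mult_distrib)
  qed
qed

lemma monic_prod_fprimes:
  fixes S :: "'a::field poly set"
  shows "\<forall>P\<in>S. fprime P \<Longrightarrow> lead_coeff (\<Prod>S) = 1"
  by (simp add: lead_coeff_prod fprime_def)

lemma fprime_dvd_prod_fprimes_iff:
  fixes S :: "'a::field poly set"
  assumes "finite S" "\<forall>P\<in>S. fprime P" "fprime Q"
  shows "Q dvd \<Prod>S \<longleftrightarrow> Q \<in> S"
  using assms fprime_dvd_prod_iff[of Q S id] fprime_dvd_fprime_iff by auto

lemma inj_on_prod_fprime_sets:
  "inj_on Prod {S :: 'a::field poly set. finite S \<and> (\<forall>P\<in>S. fprime P)}"
proof (rule inj_onI, clarsimp)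
  fix S T :: "'a poly set"
  assume S: "finite S" "\<forall>P\<in>S. fprime P" and T: "finite T" "\<forall>P\<in>T. fprime P"
    and eq: "\<Prod>S = \<Prod>T"
  have "P \<in> S \<longleftrightarrow> P \<in> T" if "fprime P" for P
    using fprime_dvd_prod_fprimes_iff[OF S that] fprime_dvd_prod_fprimes_iff[OF T that] eq by simp
  with S(2) T(2) show "S = T"
    by blast
qed

lemma degree_le_prod_fprimes:
  fixes S :: "'a::field poly set"
  assumes "finite S" "\<forall>P\<in>S. fprime P" "P \<in> S"
  shows "degree P \<le> degree (\<Prod>S)"
proof (rule dvd_imp_degree_le)
  show "P dvd \<Prod>S"
    using assms dvd_prodI[of S P id] by simp
  show "\<Prod>S \<noteq> 0"
    using assms(2) monic_prod_fprimes by force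
qed

lemma coprime_prod_fprimes_iff:
  fixes S :: "'a::field poly set"
  assumes "finite S" "\<forall>P\<in>S. fprime P"
  shows "coprime (\<Prod>S) a \<longleftrightarrow> (\<forall>P\<in>S. \<not> P dvd a)"
  using assms by (simp add: poly_coprime_prod_left_iff coprime_fprime_left_iff)

lemma prod_fprimes_square_dvd_iff:
  fixes S :: "'a::field poly set"
  assumes "finite S" "\<forall>P\<in>S. fprime P"
  shows "(\<Prod>S) ^ 2 dvd D \<longleftrightarrow> (\<forall>P\<in>S. P ^ 2 dvd D)"
proof
  assume "(\<Prod>S) ^ 2 dvd D"
  moreover have "P ^ 2 dvd (\<Prod>S) ^ 2" if "P \<in> S" for P
    using assms(1) that dvd_prodI[of S P id] by (simp add: dvd_power_same)
  ultimately show "\<forall>P\<in>S. P ^ 2 dvd D"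
    using dvd_trans by blast
next
  show "\<forall>P\<in>S. P ^ 2 dvd D \<Longrightarrow> (\<Prod>S) ^ 2 dvd D"
    using assms
  proof (induction S rule: finite_induct)
    case (insert P S)
    then obtain k where k: "D = (\<Prod>S) ^ 2 * k"
      by (meson dvdE insert_iff)
    have P: "fprime P" "P ^ 2 dvd D"
      using insert.prems by auto
    have "\<not> P dvd \<Prod>S"
      using fprime_dvd_prod_fprimes_iff[OF insert.hyps(1) _ P(1)] insert by auto
    then have "\<not> P dvd (\<Prod>S) ^ 2"
      using P(1) by (simp add: fprime_dvd_mult_iff power2_eq_square)
    with P k have "P ^ 2 dvd k"
      using fprime_square_dvd_mult_cancel by blast
    then have "(\<Prod>S) ^ 2 * P ^ 2 dvd D"
      using k by (simp add: mult_dvd_mono)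
    with insert.hyps show ?case
      by (simp add: power_mult_distrib ac_simps)
  qed simp
qed

lemma squarefree_fprime_mult_iff:
  fixes P E :: "'a::field poly"
  assumes "fprime P"
  shows "squarefree (P * E) \<longleftrightarrow> squarefree E \<and> \<not> P dvd E"
proof (cases "E = 0")
  case False
  have P: "P \<noteq> 0" "\<not> is_unit P"
    using assms by (simp_all add: fprime_nonzero fprime_not_unit)
  have "squarefree (P * E) \<Longrightarrow> \<not> P dvd E"
    using P by (metis mult_dvd_mono dvd_refl power2_eq_square squarefreeD)
  moreover have "squarefree (P * E)" if "squarefree E" "\<not> P dvd E"
  proof -
    have "\<not> Q ^ 2 dvd P * E" if Q: "fprime Q" for Q
    proof (cases "Q = P")
      case True
      with P \<open>\<not> P dvd E\<close> show ?thesis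
        by (simp add: power2_eq_square)
    next
      case False
      with Q assms \<open>squarefree E\<close> \<open>E \<noteq> 0\<close> show ?thesis
        using fprime_square_dvd_mult_cancel[OF Q] fprime_dvd_fprime_iff squarefree_iff_no_fprime_square
        by metis
    qed
    with P \<open>E \<noteq> 0\<close> show ?thesis
      by (simp add: squarefree_iff_no_fprime_square)
  qed
  ultimately show ?thesis
    using squarefree_multD(2) by blast
qed simp

section \<open>Sieve identities and real estimates\<close>

lemma alternating_sum_Pow:
  assumes "finite A"
  shows "(\<Sum>S\<in>Pow A. (-1) ^ card S) = (if A = {} then 1 else (0 :: 'b::comm_ring_1))"
  using prod_diff_conv_sum[OF assms, of "\<lambda>_. 1" "\<lambda>_. 1"] assms
  by (cases "A = {}") (simp_all add: power_0_left)

lemma card_sieve: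
  fixes T :: "'a \<Rightarrow> 'b set"
  assumes "finite X" "finite U" "\<And>x. x \<in> X \<Longrightarrow> T x \<subseteq> U"
  shows "of_nat (card {x \<in> X. T x = {}}) =
    (\<Sum>S\<in>Pow U. (-1) ^ card S * of_nat (card {x \<in> X. S \<subseteq> T x}) :: 'c::comm_ring_1)"
proof -
  have "of_nat (card {x \<in> X. T x = {}}) = (\<Sum>x\<in>X. if T x = {} then 1 else (0 :: 'c))"
    using assms(1) by (simp add: sum.If_cases Int_def)
  also have "\<dots> = (\<Sum>x\<in>X. \<Sum>S\<in>Pow (T x). (-1) ^ card S)"
    using assms by (intro sum.cong[OF refl] alternating_sum_Pow[symmetric]) (auto intro: finite_subset)
  also have "\<dots> = (\<Sum>x\<in>X. \<Sum>S\<in>Pow U. if S \<subseteq> T x then (-1) ^ card S else 0)"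
  proof (rule sum.cong[OF refl])
    fix x assume "x \<in> X"
    with assms(3) have "Pow (T x) = {S \<in> Pow U. S \<subseteq> T x}"
      by auto
    then show "(\<Sum>S\<in>Pow (T x). (-1) ^ card S) =
        (\<Sum>S\<in>Pow U. if S \<subseteq> T x then (-1) ^ card S else (0 :: 'c))"
      using assms(2) by (simp only:) (rule sum.inter_filter, simp)
  qed
  also have "\<dots> = (\<Sum>S\<in>Pow U. \<Sum>x\<in>X. if S \<subseteq> T x then (-1) ^ card S else 0)"
    by (rule sum.swap)
  also have "\<dots> = (\<Sum>S\<in>Pow U. (-1) ^ card S * of_nat (card {x \<in> X. S \<subseteq> T x}))"
    using assms(1) by (simp add: sum.If_cases Int_def mult.commute)
  finally show ?thesis .
qed

lemma card_filter_eq_sum_fibres: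
  assumes "finite X" "finite R"
  shows "card {x \<in> X. f x \<in> R} = (\<Sum>r\<in>R. card {x \<in> X. f x = r})"
proof -
  have "{x \<in> X. f x \<in> R} = (\<Union>r\<in>R. {x \<in> X. f x = r})"
    by blast
  with assms show ?thesis
    by (subst card_UN_disjoint[symmetric]) auto
qed

lemma abs_sum_minus_const_le:
  fixes f :: "'a \<Rightarrow> real"
  assumes "\<And>x. x \<in> R \<Longrightarrow> \<bar>f x - m\<bar> \<le> e"
  shows "\<bar>(\<Sum>x\<in>R. f x) - real (card R) * m\<bar> \<le> real (card R) * e"
proof -
  have "\<bar>(\<Sum>x\<in>R. f x) - real (card R) * m\<bar> = \<bar>\<Sum>x\<in>R. f x - m\<bar>"
    by (simp add: sum_subtractf)
  also have "\<dots> \<le> (\<Sum>x\<in>R. \<bar>f x - m\<bar>)"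
    by (rule sum_abs)
  also have "\<dots> \<le> (\<Sum>x\<in>R. e)"
    using assms by (rule sum_mono)
  finally show ?thesis
    by simp
qed

lemma geometric_sum_le_twice_last:
  fixes x :: real
  assumes "2 \<le> x"
  shows "(\<Sum>j\<le>J. x ^ j) \<le> 2 * x ^ J"
proof (induction J)
  case (Suc J)
  have "2 * x ^ J \<le> x * x ^ J"
    using assms by (intro mult_right_mono) auto
  with Suc show ?case
    by simp
qed simp

lemma geometric_tail_bound:
  fixes a :: "nat \<Rightarrow> real" and x :: real
  assumes "2 \<le> x" "\<And>j. \<bar>a j\<bar> \<le> (1 / x) ^ j"
  shows "summable a" "\<bar>(\<Sum>j. a j) - (\<Sum>j\<le>J. a j)\<bar> \<le> 2 / x ^ Suc J"
proof -
  have geom: "summable (\<lambda>j. (1 / x) ^ j)"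
    using assms(1) by (intro summable_geometric) auto
  then show "summable a"
    using summable_comparison_test'[OF geom, of 0 a] assms(2) by simp
  then have "(\<Sum>j. a j) - (\<Sum>j\<le>J. a j) = (\<Sum>n. a (n + Suc J))"
    using suminf_split_initial_segment[of a "Suc J"] by (simp add: lessThan_Suc_atMost)
  also have "\<bar>\<dots>\<bar> \<le> (\<Sum>n. (1 / x) ^ Suc J * (1 / x) ^ n)"
  proof -
    have "norm (\<Sum>n. a (n + Suc J)) \<le> (\<Sum>n. (1 / x) ^ Suc J * (1 / x) ^ n)"
    proof (rule norm_suminf_le)
      show "norm (a (n + Suc J)) \<le> (1 / x) ^ Suc J * (1 / x) ^ n" for n
        using assms(2)[of "n + Suc J"] by (simp add: power_add mult.commute)
      show "summable (\<lambda>n. (1 / x) ^ Suc J * (1 / x) ^ n)"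
        using geom by (rule summable_mult)
    qed
    then show ?thesis
      by simp
  qed
  also have "\<dots> = (1 / x) ^ Suc J * (\<Sum>n. (1 / x) ^ n)"
    by (rule suminf_mult[OF geom])
  also have "\<dots> = (1 / x) ^ Suc J / (1 - 1 / x)"
    using assms(1) by (subst suminf_geometric) auto
  also have "\<dots> \<le> 2 / x ^ Suc J"
    using assms(1) by (simp add: field_simps power_one_over)
  finally show "\<bar>(\<Sum>j. a j) - (\<Sum>j\<le>J. a j)\<bar> \<le> 2 / x ^ Suc J" .
qed

lemma power_exceeds_linear:
  fixes x K :: real
  assumes "1 < x"
  obtains M where "M \<ge> M0" "K * (real M + 1) < x ^ M"
proof -
  have "(\<lambda>n. real n / x ^ n + 1 / x ^ n) \<longlonglongrightarrow> 0 + 0"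
    using assms by (intro tendsto_add lim_n_over_pown LIMSEQ_divide_realpow_zero) auto
  then have "(\<lambda>n. (real n + 1) / x ^ n) \<longlonglongrightarrow> 0"
    by (simp add: add_divide_distrib)
  moreover have "0 < 1 / (\<bar>K\<bar> + 1)"
    using abs_ge_zero[of K] by simp
  ultimately have "eventually (\<lambda>n. (real n + 1) / x ^ n < 1 / (\<bar>K\<bar> + 1)) sequentially"
    by (rule order_tendstoD(2))
  then obtain M1 where M1: "\<And>n. n \<ge> M1 \<Longrightarrow> (real n + 1) / x ^ n < 1 / (\<bar>K\<bar> + 1)"
    by (auto simp: eventually_sequentially)
  define M where "M = max M0 M1"
  have "(\<bar>K\<bar> + 1) * (real M + 1) < x ^ M"
    using M1[of M] assms by (simp add: M_def field_simps)
  moreover have "K * (real M + 1) \<le> (\<bar>K\<bar> + 1) * (real M + 1)"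
    by (intro mult_right_mono) simp_all
  ultimately have "K * (real M + 1) < x ^ M"
    by linarith
  then show ?thesis
    by (intro that[of M]) (simp_all add: M_def)
qed

lemma power_half_le_sqrt_power:
  fixes x :: real
  assumes "1 \<le> x"
  shows "x ^ (N div 2) \<le> sqrt x ^ N"
proof -
  have "x ^ (N div 2) = sqrt x ^ (2 * (N div 2))"
    using assms by (simp add: power_mult)
  also have "\<dots> \<le> sqrt x ^ N"
    using assms by (intro power_increasing) auto
  finally show ?thesis .
qed

lemma sqrt_power_diff_le:
  fixes x :: real
  assumes "2 \<le> x" "0 < d" "d \<le> N"
  shows "4 * sqrt x ^ (N - d) \<le> 3 * sqrt x ^ N"
proof -
  have "4 / 3 \<le> sqrt x"
    using assms(1) by (intro real_le_rsqrt) (simp add: power2_eq_square)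
  have "4 * sqrt x ^ (N - d) \<le> 4 * sqrt x ^ (N - 1)"
    using assms by (intro mult_left_mono power_increasing) auto
  also have "\<dots> \<le> (3 * sqrt x) * sqrt x ^ (N - 1)"
    using \<open>4 / 3 \<le> sqrt x\<close> assms(1) by (intro mult_right_mono) simp_all
  also have "\<dots> = 3 * sqrt x ^ N"
    using assms by (simp add: power_Suc[symmetric])
  finally show ?thesis .
qed

lemma inverse_sqrt_power_eq_powr:
  fixes x :: real
  assumes "0 < x"
  shows "1 / sqrt x ^ N = x powr (- real N / 2)"
proof -
  have "x powr (real N / 2) = (x powr (1 / 2)) ^ N"
    using assms by (simp add: powr_power)
  then have "x powr (real N / 2) = sqrt x ^ N"
    using assms by (simp add: powr_half_sqrt)
  then show ?thesis
    by (simp add: powr_minus_divide)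
qed

lemma ratio_approx:
  fixes a b y \<kappa> c t n :: real
  assumes "0 \<le> b" "b \<le> a" "0 < a" "0 \<le> y" "y \<le> 1" "0 < \<kappa>" "1 \<le> t" "0 \<le> n" "0 \<le> c"
    and a: "\<bar>a - n * \<kappa> * t ^ 2\<bar> \<le> n * c * t" and b: "\<bar>b - n * y * \<kappa> * t ^ 2\<bar> \<le> n * c * t"
  shows "\<bar>b / a - y\<bar> \<le> 4 * c / (\<kappa> * t)"
proof (cases "2 * c \<le> \<kappa> * t")
  case True
  have "n \<noteq> 0"
    using a \<open>0 < a\<close> by auto
  with \<open>0 \<le> n\<close> have "0 < n"
    by simp
  have "n * c * t \<le> n * (\<kappa> * t / 2) * t"
    using True \<open>0 < n\<close> \<open>1 \<le> t\<close> by (intro mult_right_mono mult_left_mono) auto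
  then have a_lower: "n * \<kappa> * t ^ 2 / 2 \<le> a"
    using a by (simp add: power2_eq_square abs_le_iff algebra_simps)
  have "b - a * y = (b - n * y * \<kappa> * t ^ 2) + y * (n * \<kappa> * t ^ 2 - a)"
    by (simp add: algebra_simps)
  then have "\<bar>b - a * y\<bar> \<le> \<bar>b - n * y * \<kappa> * t ^ 2\<bar> + \<bar>y\<bar> * \<bar>n * \<kappa> * t ^ 2 - a\<bar>"
    by (metis abs_mult abs_triangle_ineq)
  then have "\<bar>b - a * y\<bar> \<le> \<bar>b - n * y * \<kappa> * t ^ 2\<bar> + y * \<bar>n * \<kappa> * t ^ 2 - a\<bar>"
    using \<open>0 \<le> y\<close> by simp
  also have "\<dots> \<le> n * c * t + 1 * (n * c * t)"
    using a b assms(4,5) by (intro add_mono mult_mono) (simp_all add: abs_minus_commute)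
  finally have num: "\<bar>b - a * y\<bar> \<le> 2 * n * c * t"
    by (simp add: ac_simps)
  have "b / a - y = (b - a * y) / a"
    using \<open>0 < a\<close> by (simp add: field_simps)
  then have "\<bar>b / a - y\<bar> = \<bar>b - a * y\<bar> / a"
    using \<open>0 < a\<close> by (simp add: abs_divide)
  also have "\<dots> \<le> 2 * n * c * t / a"
    using num \<open>0 < a\<close> by (intro divide_right_mono) simp_all
  also have "\<dots> \<le> 2 * n * c * t / (n * \<kappa> * t ^ 2 / 2)"
    using a_lower \<open>0 < a\<close> \<open>0 < n\<close> \<open>0 < \<kappa>\<close> \<open>1 \<le> t\<close> \<open>0 \<le> c\<close>
    by (intro divide_left_mono) auto
  also have "\<dots> = 4 * c / (\<kappa> * t)"
    using \<open>0 < n\<close> \<open>0 < \<kappa>\<close> \<open>1 \<le> t\<close> by (simp add: power2_eq_square field_simps)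
  finally show ?thesis .
next
  case False
  have "0 \<le> b / a" "b / a \<le> 1"
    using assms(1-3) by simp_all
  then have "\<bar>b / a - y\<bar> \<le> 1"
    using assms(4,5) by (simp add: abs_le_iff)
  also have "\<dots> \<le> 4 * c / (\<kappa> * t)"
    using False \<open>0 < \<kappa>\<close> \<open>1 \<le> t\<close> \<open>0 \<le> c\<close> by (simp add: field_simps)
  finally show ?thesis .
qed

lemma proportion_defect:
  fixes \<kappa> Q x :: real
  assumes "0 \<le> \<kappa>" "1 \<le> Q" "0 \<le> x" "x \<le> Q"
  shows "\<bar>\<kappa> * x - \<kappa> * (Q / (Q + 1)) * x\<bar> \<le> \<kappa>"
proof -
  have "\<kappa> * x - \<kappa> * (Q / (Q + 1)) * x = \<kappa> * (x / (Q + 1))"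
    using assms(2) by (simp add: field_simps)
  moreover have "0 \<le> x / (Q + 1)" "x / (Q + 1) \<le> 1"
    using assms(2-4) by simp_all
  then have "0 \<le> \<kappa> * (x / (Q + 1))" "\<kappa> * (x / (Q + 1)) \<le> \<kappa>"
    using assms(1-3) mult_left_le[of "x / (Q + 1)" \<kappa>] by simp_all
  ultimately show ?thesis
    by (simp only: abs_of_nonneg)
qed

lemma error_absorbed_base:
  fixes \<kappa> t :: real
  assumes "0 < \<kappa>" "1 \<le> t"
  shows "4 * t + \<kappa> \<le> 4 * (4 + \<kappa>) * t"
proof -
  have "\<kappa> \<le> \<kappa> * t"
    using assms by (simp add: mult_le_cancel_left1)
  moreover have "4 * (4 + \<kappa>) * t = 16 * t + 4 * (\<kappa> * t)"
    by (simp add: algebra_simps)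
  ultimately show ?thesis
    using assms by linarith
qed

lemma error_absorbed_step:
  fixes \<kappa> s t :: real
  assumes "0 < \<kappa>" "0 \<le> t" "4 * s \<le> 3 * t"
  shows "4 * t + 4 * (4 + \<kappa>) * s \<le> 4 * (4 + \<kappa>) * t"
proof -
  have "(4 + \<kappa>) * (4 * s) \<le> (4 + \<kappa>) * (3 * t)" "0 \<le> \<kappa> * t"
    using assms by (simp_all add: mult_left_mono)
  then show ?thesis
    by (simp add: algebra_simps)
qed

text \<open>
  Unrolling T_N = S_N - T_(N-d) gives the main term \<kappa> q^N \<Sum>_k (-q^-d)^k = \<kappa> q^N q^d / (q^d + 1);
  the errors 4 sqrt(q)^(N - k d) decay geometrically, and the constant 4 (4 + \<kappa>) absorbs their sum.
\<close>

lemma alternating_recursion_approx: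
  fixes S T :: "nat \<Rightarrow> 'b \<Rightarrow> real" and q \<kappa> :: real
  assumes q: "2 \<le> q" and \<kappa>: "0 < \<kappa>" and d: "0 < d"
    and \<sigma>: "\<And>r. r \<in> U \<Longrightarrow> \<sigma> r \<in> U"
    and S: "\<And>N r. r \<in> U \<Longrightarrow> \<bar>S N r - \<kappa> * q ^ N\<bar> \<le> 4 * sqrt q ^ N"
    and T: "\<And>N r. r \<in> U \<Longrightarrow> T N r = S N r - (if d \<le> N then T (N - d) (\<sigma> r) else 0)"
    and r: "r \<in> U"
  shows "\<bar>T N r - \<kappa> * (q ^ d / (q ^ d + 1)) * q ^ N\<bar> \<le> 4 * (4 + \<kappa>) * sqrt q ^ N"
  using r
proof (induction N arbitrary: r rule: less_induct)
  case (less N)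
  define y where "y = q ^ d / (q ^ d + 1)"
  have "1 \<le> sqrt q ^ N" "1 \<le> q ^ d"
    using q by (simp_all add: one_le_power)
  show ?case
  proof (cases "d \<le> N")
    case False
    then have "\<bar>\<kappa> * q ^ N - \<kappa> * y * q ^ N\<bar> \<le> \<kappa>"
      unfolding y_def using q \<kappa> \<open>1 \<le> q ^ d\<close> by (intro proportion_defect) (simp_all add: power_increasing)
    with S[OF less.prems, of N] T[OF less.prems, of N] False
    have "\<bar>T N r - \<kappa> * y * q ^ N\<bar> \<le> 4 * sqrt q ^ N + \<kappa>"
      by simp
    also have "\<dots> \<le> 4 * (4 + \<kappa>) * sqrt q ^ N"
      using \<kappa> \<open>1 \<le> sqrt q ^ N\<close> by (rule error_absorbed_base)
    finally show ?thesis
      unfolding y_def .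
  next
    case True
    have IH: "\<bar>T (N - d) (\<sigma> r) - \<kappa> * y * q ^ (N - d)\<bar> \<le> 4 * (4 + \<kappa>) * sqrt q ^ (N - d)"
      using less.IH[of "N - d" "\<sigma> r"] \<sigma>[OF less.prems] True d unfolding y_def by simp
    have "q ^ N = q ^ (N - d) * q ^ d"
      using True by (simp flip: power_add)
    then have "\<kappa> * y * q ^ N = \<kappa> * q ^ N - \<kappa> * y * q ^ (N - d)"
      using \<open>1 \<le> q ^ d\<close> by (simp add: y_def field_simps)
    with S[OF less.prems, of N] T[OF less.prems, of N] IH True
    have "\<bar>T N r - \<kappa> * y * q ^ N\<bar> \<le> 4 * sqrt q ^ N + 4 * (4 + \<kappa>) * sqrt q ^ (N - d)"
      by simp linarith
    also have "\<dots> \<le> 4 * (4 + \<kappa>) * sqrt q ^ N"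
      by (rule error_absorbed_step[OF \<kappa> _ sqrt_power_diff_le[OF q d True]]) (use q in simp)
    finally show ?thesis
      unfolding y_def .
  qed
qed

section \<open>Counting polynomials over a finite field\<close>

definition polys_deg_lt :: "nat \<Rightarrow> 'a::zero poly set" where
  "polys_deg_lt k = {p. \<forall>i\<ge>k. coeff p i = 0}"

definition monic_polys :: "nat \<Rightarrow> 'a::{zero,one} poly set" where
  "monic_polys k = {p. lead_coeff p = 1 \<and> degree p = k}"

lemma polys_deg_lt_iff: "p \<in> polys_deg_lt k \<longleftrightarrow> p = 0 \<or> degree p < k"
proof
  assume "p \<in> polys_deg_lt k"
  then have "p \<noteq> 0 \<Longrightarrow> \<not> k \<le> degree p"
    by (auto simp: polys_deg_lt_def)
  then show "p = 0 \<or> degree p < k"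
    by linarith
qed (auto simp: polys_deg_lt_def coeff_eq_0)

lemma polys_deg_lt_Suc: "polys_deg_lt (Suc k) = (\<lambda>(a, p). pCons a p) ` (UNIV \<times> polys_deg_lt k)"
proof (intro set_eqI iffI)
  fix x :: "'a poly"
  assume x: "x \<in> polys_deg_lt (Suc k)"
  obtain a p where ap: "x = pCons a p"
    by (cases x)
  have "p \<in> polys_deg_lt k"
    unfolding polys_deg_lt_def mem_Collect_eq
  proof (intro allI impI)
    fix i assume "k \<le> i"
    with x have "coeff x (Suc i) = 0"
      by (simp add: polys_deg_lt_def)
    then show "coeff p i = 0"
      by (simp add: ap)
  qed
  with ap show "x \<in> (\<lambda>(a, p). pCons a p) ` (UNIV \<times> polys_deg_lt k)"
    by force
qed (auto simp: polys_deg_lt_def coeff_pCons split: nat.splits)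

lemma finite_polys_deg_lt: "finite (polys_deg_lt k :: 'a::{finite,zero} poly set)"
proof (induction k)
  case 0
  have "polys_deg_lt 0 = {0 :: 'a poly}"
    by (auto simp: polys_deg_lt_iff)
  then show ?case
    by simp
qed (simp add: polys_deg_lt_Suc)

lemma card_polys_deg_lt: "card (polys_deg_lt k :: 'a::{finite,zero} poly set) = CARD('a) ^ k"
proof (induction k)
  case 0
  have "polys_deg_lt 0 = {0 :: 'a poly}"
    by (auto simp: polys_deg_lt_iff)
  then show ?case
    by simp
next
  case (Suc k)
  have "inj_on (\<lambda>(a, p). pCons a (p :: 'a poly)) (UNIV \<times> polys_deg_lt k)"
    by (auto simp: inj_on_def)
  with Suc show ?case
    by (simp add: polys_deg_lt_Suc card_image card_cartesian_product)
qed

lemma monic_polys_eq_image: "monic_polys k = (\<lambda>v. monom 1 k + v) ` (polys_deg_lt k :: 'a::comm_ring_1 poly set)"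
proof (intro set_eqI iffI)
  fix p :: "'a poly"
  assume "p \<in> monic_polys k"
  then have "p - monom 1 k \<in> polys_deg_lt k"
    by (auto simp: polys_deg_lt_def monic_polys_def coeff_monom coeff_eq_0)
  then show "p \<in> (\<lambda>v. monom 1 k + v) ` polys_deg_lt k"
    by force
next
  fix p :: "'a poly"
  assume "p \<in> (\<lambda>v. monom 1 k + v) ` polys_deg_lt k"
  then obtain v where v: "\<forall>i\<ge>k. coeff v i = 0" "p = monom 1 k + v"
    by (auto simp: polys_deg_lt_def)
  then have "coeff p k = 1" "\<forall>i>k. coeff p i = 0"
    by (simp_all add: coeff_monom)
  then have "degree p = k"
    by (intro antisym degree_le le_degree) simp_all
  with \<open>coeff p k = 1\<close> show "p \<in> monic_polys k"
    by (simp add: monic_polys_def)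
qed

lemma mem_monic_polys_degree: "lead_coeff p = 1 \<Longrightarrow> p \<in> monic_polys (degree p)"
  by (simp add: monic_polys_def)

lemma finite_monic_polys: "finite (monic_polys k :: 'a::{finite,comm_ring_1} poly set)"
  by (simp add: monic_polys_eq_image finite_polys_deg_lt)

lemma card_monic_polys: "card (monic_polys k :: 'a::{finite,comm_ring_1} poly set) = CARD('a) ^ k"
  unfolding monic_polys_eq_image by (subst card_image) (auto simp: inj_on_def card_polys_deg_lt)

lemma monic_power:
  fixes p :: "'a::idom poly"
  assumes "lead_coeff p = 1"
  shows "lead_coeff (p ^ n) = 1" "degree (p ^ n) = n * degree p"
proof -
  show "lead_coeff (p ^ n) = 1"
    by (simp only: lead_coeff_power assms power_one)
  from assms have "p \<noteq> 0"
    by auto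
  then show "degree (p ^ n) = n * degree p"
    by (rule degree_power_eq)
qed

lemma mult_mem_monic_polys_iff:
  fixes A E :: "'a::idom poly"
  assumes "lead_coeff A = 1"
  shows "A * E \<in> monic_polys n \<longleftrightarrow> degree A \<le> n \<and> E \<in> monic_polys (n - degree A)"
proof (cases "E = 0")
  case False
  moreover have "A \<noteq> 0"
    using assms by auto
  ultimately have "degree (A * E) = degree A + degree E"
    by (simp add: degree_mult_eq)
  moreover have "lead_coeff (A * E) = lead_coeff E"
    by (simp only: lead_coeff_mult assms mult_1)
  ultimately show ?thesis
    by (auto simp: monic_polys_def)
qed (auto simp: monic_polys_def)

lemma add_lower_mem_monic_polys:
  fixes p r :: "'a::comm_ring_1 poly"
  assumes "p \<in> monic_polys N" "r \<in> polys_deg_lt N"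
  shows "p + r \<in> monic_polys N"
proof -
  have p: "degree p = N" "coeff p (degree p) = 1"
    using assms(1) unfolding monic_polys_def by blast+
  then have "coeff p N = 1"
    by simp
  have "degree (p + r) = N"
    using assms(2) p(1) by (cases "r = 0") (simp_all add: polys_deg_lt_iff degree_add_eq_left)
  moreover have "coeff r N = 0"
    using assms(2) by (auto simp: polys_deg_lt_iff coeff_eq_0)
  ultimately show ?thesis
    using \<open>coeff p N = 1\<close> by (simp add: monic_polys_def)
qed

lemma finite_HN: "finite (HN N H :: 'a::{finite,field} poly set)"
  by (rule finite_subset[OF _ finite_monic_polys[of N]]) (auto simp: HN_def monic_polys_def)

lemma two_le_card_field: "2 \<le> CARD('a::{finite,field})"
proof -
  have "card {0 :: 'a, 1} \<le> CARD('a)"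
    by (rule card_mono) auto
  then show ?thesis
    by simp
qed

definition fprimes_upto :: "nat \<Rightarrow> 'a::field poly set" where
  "fprimes_upto N = {P. fprime P \<and> degree P \<le> N}"

lemma finite_fprimes_upto: "finite (fprimes_upto N :: 'a::{finite,field} poly set)"
  by (rule finite_subset[OF _ finite_polys_deg_lt[of "Suc N"]]) (auto simp: fprimes_upto_def polys_deg_lt_iff)

lemma fprime_sets_fprimes_upto:
  "S \<in> Pow (fprimes_upto N) \<Longrightarrow> finite (S :: 'a::{finite,field} poly set) \<and> (\<forall>P\<in>S. fprime P)"
  using finite_subset[OF _ finite_fprimes_upto] by (auto simp: fprimes_upto_def)

lemma card_fprime_sets_degree_eq:
  "card {S \<in> Pow (fprimes_upto N :: 'a::{finite,field} poly set). degree (\<Prod>S) = j} \<le> CARD('a) ^ j"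
proof -
  let ?X = "{S \<in> Pow (fprimes_upto N :: 'a poly set). degree (\<Prod>S) = j}"
  have "inj_on Prod ?X"
    using fprime_sets_fprimes_upto by (intro inj_on_subset[OF inj_on_prod_fprime_sets]) blast
  moreover have "Prod ` ?X \<subseteq> monic_polys j"
  proof
    fix A assume "A \<in> Prod ` ?X"
    then obtain S where "S \<in> ?X" "A = \<Prod>S"
      by blast
    with fprime_sets_fprimes_upto[of S N] show "A \<in> monic_polys j"
      using mem_monic_polys_degree[OF monic_prod_fprimes[of S]] by simp
  qed
  then have "card (Prod ` ?X) \<le> card (monic_polys j :: 'a poly set)"
    by (intro card_mono finite_monic_polys)
  ultimately show ?thesis
    by (simp add: card_image card_monic_polys)
qed

lemma card_fprime_sets_degree_le:
  "real (card {S \<in> Pow (fprimes_upto N :: 'a::{finite,field} poly set). degree (\<Prod>S) \<le> M})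
    \<le> 2 * real CARD('a) ^ M"
proof -
  have "{S \<in> Pow (fprimes_upto N :: 'a poly set). degree (\<Prod>S) \<le> M} =
      (\<Union>j\<le>M. {S \<in> Pow (fprimes_upto N). degree (\<Prod>S) = j})"
    by auto
  then have "card {S \<in> Pow (fprimes_upto N :: 'a poly set). degree (\<Prod>S) \<le> M} \<le>
      (\<Sum>j\<le>M. card {S \<in> Pow (fprimes_upto N :: 'a poly set). degree (\<Prod>S) = j})"
    by (simp add: card_UN_le)
  also have "\<dots> \<le> (\<Sum>j\<le>M. CARD('a) ^ j)"
    by (intro sum_mono card_fprime_sets_degree_eq)
  finally have "real (card {S \<in> Pow (fprimes_upto N :: 'a poly set). degree (\<Prod>S) \<le> M}) \<le>
      (\<Sum>j\<le>M. real CARD('a) ^ j)"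
    by (simp flip: of_nat_sum of_nat_power)
  also have "\<dots> \<le> 2 * real CARD('a) ^ M"
    using two_le_card_field[where 'a='a] by (intro geometric_sum_le_twice_last) simp
  finally show ?thesis .
qed

section \<open>Residue classes modulo a monic polynomial\<close>

locale monic_modulus =
  fixes G :: "'a::{finite,field} poly"
  assumes monic_G: "lead_coeff G = 1"
begin

lemma modulus_nonzero: "G \<noteq> 0"
  using monic_G by auto

definition residue_class :: "nat \<Rightarrow> 'a poly \<Rightarrow> 'a poly set" where
  "residue_class N r = {D \<in> monic_polys N. D mod G = r}"

definition unit_residues :: "'a poly set" where
  "unit_residues = {r \<in> polys_deg_lt (degree G). coprime r G}"

lemma finite_residue_class: "finite (residue_class N r)"
  unfolding residue_class_def by (rule finite_subset[OF _ finite_monic_polys]) auto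

lemma finite_unit_residues: "finite unit_residues"
  unfolding unit_residues_def by (rule finite_subset[OF _ finite_polys_deg_lt]) auto

lemma mod_modulus_eq_self_iff: "r mod G = r \<longleftrightarrow> r \<in> polys_deg_lt (degree G)"
proof
  assume "r mod G = r"
  then show "r \<in> polys_deg_lt (degree G)"
    using degree_mod_less[OF modulus_nonzero, of r] by (simp add: polys_deg_lt_iff)
qed (auto simp: polys_deg_lt_iff mod_poly_less)

lemma mod_modulus_mem_polys_deg_lt [simp]: "D mod G \<in> polys_deg_lt (degree G)"
  using mod_modulus_eq_self_iff[of "D mod G"] by simp

lemma mod_modulus_mem_unit_residues_iff: "D mod G \<in> unit_residues \<longleftrightarrow> coprime D G"
  using modulus_nonzero by (simp add: unit_residues_def)

lemma residue_class_eq_image: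
  assumes "degree G \<le> N" "r \<in> polys_deg_lt (degree G)"
  shows "residue_class N r = (\<lambda>F. G * F + r) ` monic_polys (N - degree G)"
proof -
  have r_low: "r \<in> polys_deg_lt N" "- r \<in> polys_deg_lt N"
    using assms by (auto simp: polys_deg_lt_iff)
  have "D \<in> residue_class N r \<longleftrightarrow> (\<exists>F\<in>monic_polys (N - degree G). D = G * F + r)" for D
  proof
    assume D: "D \<in> residue_class N r"
    then have D_eq: "D = G * (D div G) + r"
      using div_mult_mod_eq[of D G] unfolding residue_class_def by (simp add: ac_simps)
    then have "G * (D div G) = D + - r"
      by (simp add: algebra_simps)
    moreover have "D + - r \<in> monic_polys N"
      using D r_low(2) add_lower_mem_monic_polys[of D N "- r"] by (simp add: residue_class_def)
    ultimately have "D div G \<in> monic_polys (N - degree G)"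
      using mult_mem_monic_polys_iff[OF monic_G, of "D div G" N] by simp
    with D_eq show "\<exists>F\<in>monic_polys (N - degree G). D = G * F + r"
      by blast
  next
    assume "\<exists>F\<in>monic_polys (N - degree G). D = G * F + r"
    then obtain F where F: "F \<in> monic_polys (N - degree G)" "D = G * F + r"
      by blast
    with assms(1) have "G * F \<in> monic_polys N"
      by (simp add: mult_mem_monic_polys_iff[OF monic_G])
    then have "D \<in> monic_polys N"
      using F(2) r_low(1) by (simp add: add_lower_mem_monic_polys)
    moreover have "D mod G = r"
      using F(2) assms(2) mod_modulus_eq_self_iff by simp
    ultimately show "D \<in> residue_class N r"
      by (simp add: residue_class_def)
  qed
  then show ?thesis
    by blast
qed

lemma card_residue_class:
  assumes "degree G \<le> N" "r \<in> polys_deg_lt (degree G)"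
  shows "card (residue_class N r) = CARD('a) ^ (N - degree G)"
proof -
  have "inj_on (\<lambda>F. G * F + r) (monic_polys (N - degree G))"
    using modulus_nonzero by (auto simp: inj_on_def)
  then show ?thesis
    by (simp add: residue_class_eq_image[OF assms] card_image card_monic_polys)
qed

lemma card_residue_class_le_one:
  assumes "N < degree G"
  shows "card (residue_class N r) \<le> 1"
proof -
  have "residue_class N r \<subseteq> {r}"
    using assms by (auto simp: residue_class_def monic_polys_def mod_poly_less)
  then have "card (residue_class N r) \<le> card {r}"
    by (rule card_mono[rotated]) simp
  then show ?thesis
    by simp
qed

lemma card_residue_class_approx:
  assumes "r \<in> polys_deg_lt (degree G)"
  shows "\<bar>real (card (residue_class N r)) - real CARD('a) ^ N / real CARD('a) ^ degree G\<bar> \<le> 1"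
proof (cases "degree G \<le> N")
  case True
  then have "real CARD('a) ^ N / real CARD('a) ^ degree G = real CARD('a) ^ (N - degree G)"
    by (simp add: power_diff)
  then show ?thesis
    using card_residue_class[OF True assms] by simp
next
  case False
  then have "real CARD('a) ^ N \<le> real CARD('a) ^ degree G"
    by (intro power_increasing) auto
  then have "0 \<le> real CARD('a) ^ N / real CARD('a) ^ degree G" "real CARD('a) ^ N / real CARD('a) ^ degree G \<le> 1"
    by (simp_all add: divide_le_eq_1)
  moreover have "real (card (residue_class N r)) \<le> 1"
    using card_residue_class_le_one False by simp
  ultimately show ?thesis
    by linarith
qed

lemma mult_mem_residue_class_iff:
  assumes "lead_coeff A = 1" "(B * A) mod G = 1 mod G" "r \<in> polys_deg_lt (degree G)"
  shows "A * E \<in> residue_class N r \<longleftrightarrow>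
    degree A \<le> N \<and> E \<in> residue_class (N - degree A) ((B * r) mod G)"
proof -
  have "(A * E) mod G = r \<longleftrightarrow> E mod G = (B * r) mod G"
  proof
    assume AE: "(A * E) mod G = r"
    have "E mod G = ((B * A) mod G * E) mod G"
      using assms(2) by (simp add: mod_mult_left_eq)
    also have "\<dots> = (B * (A * E)) mod G"
      by (simp add: mod_mult_left_eq mult.assoc)
    also have "\<dots> = (B * r) mod G"
      using AE mod_mult_right_eq[of B "A * E" G] by simp
    finally show "E mod G = (B * r) mod G" .
  next
    assume E: "E mod G = (B * r) mod G"
    have "(A * E) mod G = (A * (E mod G)) mod G"
      by (simp add: mod_mult_right_eq)
    also have "\<dots> = ((B * A) * r) mod G"
      using E by (simp add: mod_mult_right_eq ac_simps)
    also have "\<dots> = ((B * A) mod G * r) mod G"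
      by (simp add: mod_mult_left_eq)
    also have "\<dots> = r"
      using assms(2,3) by (simp add: mod_mult_left_eq mod_modulus_eq_self_iff)
    finally show "(A * E) mod G = r" .
  qed
  then show ?thesis
    by (auto simp: residue_class_def mult_mem_monic_polys_iff[OF assms(1)])
qed

lemma card_multiples_in_residue_class:
  assumes "lead_coeff A = 1" "(B * A) mod G = 1 mod G" "r \<in> polys_deg_lt (degree G)" "degree A \<le> N"
  shows "card {D \<in> residue_class N r. A dvd D \<and> \<Phi> D} =
    card {E \<in> residue_class (N - degree A) ((B * r) mod G). \<Phi> (A * E)}"
proof -
  have "{D \<in> residue_class N r. A dvd D \<and> \<Phi> D} =
      (\<lambda>E. A * E) ` {E \<in> residue_class (N - degree A) ((B * r) mod G). \<Phi> (A * E)}"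
    using mult_mem_residue_class_iff[OF assms(1-3)] assms(4) by (auto elim!: dvdE)
  moreover have "inj ((*) A)"
    using assms(1) by (auto simp: inj_on_def)
  ultimately show ?thesis
    by (simp add: card_image inj_on_subset[of "(*) A" UNIV])
qed

lemma dvd_mem_residue_class:
  assumes "D \<in> residue_class N r" "A dvd D"
  shows "degree A \<le> N" and "r \<in> unit_residues \<Longrightarrow> coprime A G"
proof -
  have "D \<noteq> 0" "degree D = N"
    using assms(1) by (auto simp: residue_class_def monic_polys_def)
  with assms(2) show "degree A \<le> N"
    using dvd_imp_degree_le by blast
  assume "r \<in> unit_residues"
  with assms(1) have "coprime D G"
    by (auto simp: residue_class_def simp flip: mod_modulus_mem_unit_residues_iff)
  with assms(2) show "coprime A G"
    using coprime_divisors dvd_refl by blast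
qed

lemma card_multiples_in_residue_class_approx:
  assumes "lead_coeff A = 1" "r \<in> unit_residues"
  shows "\<bar>real (card {D \<in> residue_class N r. A dvd D}) -
      (if coprime A G \<and> degree A \<le> N then real CARD('a) ^ (N - degree A) / real CARD('a) ^ degree G else 0)\<bar>
    \<le> (if degree A \<le> N then 1 else 0)"
proof (cases "coprime A G \<and> degree A \<le> N")
  case True
  then obtain u where "(u * A) mod G = 1 mod G"
    using inverse_mod_exists by blast
  moreover have r: "r \<in> polys_deg_lt (degree G)"
    using assms(2) by (simp add: unit_residues_def)
  ultimately have "card {D \<in> residue_class N r. A dvd D} = card (residue_class (N - degree A) ((u * r) mod G))"
    using card_multiples_in_residue_class[OF assms(1), of u r N "\<lambda>_. True"] True by simp
  with True show ?thesis
    using card_residue_class_approx[of "(u * r) mod G" "N - degree A"] by simp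
next
  case False
  then have no_multiples: "{D \<in> residue_class N r. A dvd D} = {}"
    using dvd_mem_residue_class assms(2) by blast
  show ?thesis
    unfolding no_multiples using False by simp
qed

section \<open>Squarefree polynomials in a residue class\<close>

definition sqfree_class :: "nat \<Rightarrow> 'a poly \<Rightarrow> 'a poly set" where
  "sqfree_class N r = {D \<in> residue_class N r. squarefree D}"

lemma finite_sqfree_class: "finite (sqfree_class N r)"
  unfolding sqfree_class_def using finite_residue_class by simp

lemma card_sqfree_class_sieve:
  "real (card (sqfree_class N r)) =
    (\<Sum>S\<in>Pow (fprimes_upto N). (-1) ^ card S * real (card {D \<in> residue_class N r. (\<Prod>S) ^ 2 dvd D}))"
proof -
  define T where "T D = {P. fprime P \<and> P ^ 2 dvd D}" for D :: "'a poly"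
  have D: "D \<noteq> 0" "degree D = N" if "D \<in> residue_class N r" for D
    using that by (auto simp: residue_class_def monic_polys_def)
  have "T D \<subseteq> fprimes_upto N" if "D \<in> residue_class N r" for D
  proof
    fix P assume "P \<in> T D"
    then have "fprime P" "P dvd D"
      by (auto simp: T_def power2_eq_square intro: dvd_mult_left)
    then have "degree P \<le> N"
      using D[OF that] dvd_imp_degree_le by metis
    with \<open>fprime P\<close> show "P \<in> fprimes_upto N"
      by (simp add: fprimes_upto_def)
  qed
  then have sieve: "real (card {D \<in> residue_class N r. T D = {}}) =
      (\<Sum>S\<in>Pow (fprimes_upto N). (-1) ^ card S * real (card {D \<in> residue_class N r. S \<subseteq> T D}))"
    by (intro card_sieve finite_residue_class finite_fprimes_upto)
  have sqfree: "{D \<in> residue_class N r. T D = {}} = sqfree_class N r"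
  proof -
    have "T D = {} \<longleftrightarrow> squarefree D" if "D \<in> residue_class N r" for D
      using squarefree_iff_no_fprime_square[OF D(1)[OF that]] by (auto simp: T_def)
    then show ?thesis
      by (auto simp: sqfree_class_def)
  qed
  have subsets: "{D \<in> residue_class N r. S \<subseteq> T D} = {D \<in> residue_class N r. (\<Prod>S) ^ 2 dvd D}"
    if "S \<in> Pow (fprimes_upto N)" for S
  proof -
    have "finite S" "\<forall>P\<in>S. fprime P"
      using that finite_fprimes_upto finite_subset by (auto simp: fprimes_upto_def)
    then have "S \<subseteq> T D \<longleftrightarrow> (\<Prod>S) ^ 2 dvd D" for D
      by (auto simp: T_def prod_fprimes_square_dvd_iff)
    then show ?thesis
      by simp
  qed
  from sieve have "real (card (sqfree_class N r)) =
      (\<Sum>S\<in>Pow (fprimes_upto N). (-1) ^ card S * real (card {D \<in> residue_class N r. S \<subseteq> T D}))"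
    by (simp only: sqfree)
  also have "\<dots> = (\<Sum>S\<in>Pow (fprimes_upto N).
      (-1) ^ card S * real (card {D \<in> residue_class N r. (\<Prod>S) ^ 2 dvd D}))"
    by (rule sum.cong[OF refl]) (simp only: subsets)
  finally show ?thesis .
qed

text \<open>
  A monic squarefree A prime to G is encoded by its set S of prime factors, with
  \<mu>(A) = (-1)^|S|; thus \<^term>\<open>mobius_sum j\<close> is the sum of \<mu>(A) over such A of degree j.
\<close>

definition mobius_sets :: "nat \<Rightarrow> 'a poly set set" where
  "mobius_sets j = {S. finite S \<and> (\<forall>P\<in>S. fprime P \<and> \<not> P dvd G) \<and> degree (\<Prod>S) = j}"

definition mobius_sum :: "nat \<Rightarrow> real" where
  "mobius_sum j = (\<Sum>S\<in>mobius_sets j. (-1) ^ card S)"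

lemma mobius_sets_eq:
  assumes "j \<le> N"
  shows "mobius_sets j = {S \<in> Pow (fprimes_upto N). (\<forall>P\<in>S. \<not> P dvd G) \<and> degree (\<Prod>S) = j}"
proof (intro set_eqI iffI)
  fix S assume S: "S \<in> mobius_sets j"
  then have "degree P \<le> N" if "P \<in> S" for P
    using degree_le_prod_fprimes[of S P] that assms by (auto simp: mobius_sets_def)
  with S show "S \<in> {S \<in> Pow (fprimes_upto N). (\<forall>P\<in>S. \<not> P dvd G) \<and> degree (\<Prod>S) = j}"
    by (auto simp: mobius_sets_def fprimes_upto_def)
next
  fix S assume "S \<in> {S \<in> Pow (fprimes_upto N). (\<forall>P\<in>S. \<not> P dvd G) \<and> degree (\<Prod>S) = j}"
  with fprime_sets_fprimes_upto[of S N] show "S \<in> mobius_sets j"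
    by (auto simp: mobius_sets_def)
qed

lemma abs_mobius_sum_le: "\<bar>mobius_sum j\<bar> \<le> real CARD('a) ^ j"
proof -
  have "\<bar>mobius_sum j\<bar> \<le> real (card (mobius_sets j))"
    unfolding mobius_sum_def using sum_abs[of "\<lambda>S. (-1::real) ^ card S" "mobius_sets j"] by simp
  also have "card (mobius_sets j) \<le> card {S \<in> Pow (fprimes_upto j :: 'a poly set). degree (\<Prod>S) = j}"
    unfolding mobius_sets_eq[OF order_refl]
    by (intro card_mono) (auto intro: finite_subset[OF _ finite_Pow_iff[THEN iffD2, OF finite_fprimes_upto]])
  also note card_fprime_sets_degree_eq
  finally show ?thesis
    by simp
qed

lemma sieve_main_term:
  "(\<Sum>S\<in>Pow (fprimes_upto N). (-1) ^ card S *
      (if (\<forall>P\<in>S. \<not> P dvd G) \<and> 2 * degree (\<Prod>S) \<le> N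
       then real CARD('a) ^ (N - 2 * degree (\<Prod>S)) / real CARD('a) ^ degree G else 0))
   = real CARD('a) ^ N / real CARD('a) ^ degree G * (\<Sum>j\<le>N div 2. mobius_sum j / real CARD('a) ^ (2 * j))"
proof -
  define q where "q = real CARD('a)"
  have "q > 0"
    by (simp add: q_def)
  define U where "U = {S \<in> Pow (fprimes_upto N). (\<forall>P\<in>S. \<not> P dvd G) \<and> 2 * degree (\<Prod>S) \<le> N}"
  have "finite U"
    unfolding U_def by (rule finite_subset[of _ "Pow (fprimes_upto N)"]) (auto simp: finite_fprimes_upto)
  have "(\<Sum>S\<in>Pow (fprimes_upto N). (-1) ^ card S *
      (if (\<forall>P\<in>S. \<not> P dvd G) \<and> 2 * degree (\<Prod>S) \<le> N then q ^ (N - 2 * degree (\<Prod>S)) / q ^ degree G else 0))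
    = (\<Sum>S\<in>Pow (fprimes_upto N). if (\<forall>P\<in>S. \<not> P dvd G) \<and> 2 * degree (\<Prod>S) \<le> N
        then (-1) ^ card S * (q ^ (N - 2 * degree (\<Prod>S)) / q ^ degree G) else 0)"
    by (rule sum.cong) simp_all
  also have "\<dots> = (\<Sum>S\<in>U. (-1) ^ card S * (q ^ (N - 2 * degree (\<Prod>S)) / q ^ degree G))"
    unfolding U_def by (rule sum.inter_filter[symmetric]) (simp add: finite_fprimes_upto)
  also have "\<dots> = (\<Sum>j\<le>N div 2. \<Sum>S\<in>{S \<in> U. degree (\<Prod>S) = j}.
      (-1) ^ card S * (q ^ (N - 2 * degree (\<Prod>S)) / q ^ degree G))"
    using \<open>finite U\<close> by (intro sum.group[symmetric]) (auto simp: U_def)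
  also have "\<dots> = (\<Sum>j\<le>N div 2. q ^ N / q ^ degree G * (mobius_sum j / q ^ (2 * j)))"
  proof (rule sum.cong[OF refl])
    fix j assume "j \<in> {..N div 2}"
    then have j: "2 * j \<le> N"
      by simp
    then have "{S \<in> U. degree (\<Prod>S) = j} = mobius_sets j"
      by (auto simp: U_def mobius_sets_eq[of j N])
    then have "(\<Sum>S\<in>{S \<in> U. degree (\<Prod>S) = j}. (-1) ^ card S * (q ^ (N - 2 * degree (\<Prod>S)) / q ^ degree G))
        = (\<Sum>S\<in>mobius_sets j. (-1) ^ card S * (q ^ (N - 2 * j) / q ^ degree G))"
      by (intro sum.cong) (auto simp: mobius_sets_def)
    also have "\<dots> = mobius_sum j * (q ^ (N - 2 * j) / q ^ degree G)"
      unfolding mobius_sum_def by (rule sum_distrib_right[symmetric])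
    also have "\<dots> = q ^ N / q ^ degree G * (mobius_sum j / q ^ (2 * j))"
      using j \<open>q > 0\<close> by (simp add: power_diff ac_simps)
    finally show "(\<Sum>S\<in>{S \<in> U. degree (\<Prod>S) = j}. (-1) ^ card S * (q ^ (N - 2 * degree (\<Prod>S)) / q ^ degree G))
        = q ^ N / q ^ degree G * (mobius_sum j / q ^ (2 * j))" .
  qed
  also have "\<dots> = q ^ N / q ^ degree G * (\<Sum>j\<le>N div 2. mobius_sum j / q ^ (2 * j))"
    by (simp add: sum_distrib_left)
  finally show ?thesis
    unfolding q_def .
qed

lemma sqfree_class_truncated_approx:
  assumes "r \<in> unit_residues"
  shows "\<bar>real (card (sqfree_class N r)) - real CARD('a) ^ N / real CARD('a) ^ degree G *
      (\<Sum>j\<le>N div 2. mobius_sum j / real CARD('a) ^ (2 * j))\<bar> \<le> 2 * real CARD('a) ^ (N div 2)"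
proof -
  define c where "c S = real (card {D \<in> residue_class N r. (\<Prod>S) ^ 2 dvd D})" for S :: "'a poly set"
  define m where "m S = (if (\<forall>P\<in>S. \<not> P dvd G) \<and> 2 * degree (\<Prod>S) \<le> N
      then real CARD('a) ^ (N - 2 * degree (\<Prod>S)) / real CARD('a) ^ degree G else 0)" for S :: "'a poly set"
  have error: "\<bar>c S - m S\<bar> \<le> (if 2 * degree (\<Prod>S) \<le> N then 1 else 0)" if "S \<in> Pow (fprimes_upto N)" for S
  proof -
    have S: "finite S" "\<forall>P\<in>S. fprime P"
      using fprime_sets_fprimes_upto[OF that] by blast+
    then have monic: "lead_coeff ((\<Prod>S) ^ 2) = 1" and deg: "degree ((\<Prod>S) ^ 2) = 2 * degree (\<Prod>S)"
      using monic_power[OF monic_prod_fprimes[of S]] by simp_all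
    have cop: "coprime ((\<Prod>S) ^ 2) G \<longleftrightarrow> (\<forall>P\<in>S. \<not> P dvd G)"
      using S by (simp add: power2_eq_square poly_coprime_mult_left_iff coprime_prod_fprimes_iff)
    show ?thesis
      using card_multiples_in_residue_class_approx[OF monic assms, of N]
      unfolding c_def m_def deg cop .
  qed
  have "real (card (sqfree_class N r)) - real CARD('a) ^ N / real CARD('a) ^ degree G *
      (\<Sum>j\<le>N div 2. mobius_sum j / real CARD('a) ^ (2 * j))
      = (\<Sum>S\<in>Pow (fprimes_upto N). (-1) ^ card S * (c S - m S))"
    unfolding card_sqfree_class_sieve sieve_main_term[symmetric] c_def m_def
    by (simp add: sum_subtractf right_diff_distrib)
  also have "\<bar>\<dots>\<bar> \<le> (\<Sum>S\<in>Pow (fprimes_upto N). \<bar>c S - m S\<bar>)"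
    using sum_abs[of "\<lambda>S. (-1) ^ card S * (c S - m S)"] by (simp add: abs_mult)
  also have "\<dots> \<le> (\<Sum>S\<in>Pow (fprimes_upto N :: 'a poly set). if 2 * degree (\<Prod>S) \<le> N then 1 else 0)"
    by (intro sum_mono error)
  also have "\<dots> = (\<Sum>S\<in>{S \<in> Pow (fprimes_upto N :: 'a poly set). 2 * degree (\<Prod>S) \<le> N}. 1)"
    by (rule sum.inter_filter[symmetric]) (simp add: finite_fprimes_upto)
  also have "\<dots> = real (card {S \<in> Pow (fprimes_upto N :: 'a poly set). 2 * degree (\<Prod>S) \<le> N})"
    by simp
  also have "\<dots> = real (card {S \<in> Pow (fprimes_upto N :: 'a poly set). degree (\<Prod>S) \<le> N div 2})"
    by (simp add: less_eq_div_iff_mult_less_eq mult.commute)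
  also have "\<dots> \<le> 2 * real CARD('a) ^ (N div 2)"
    by (rule card_fprime_sets_degree_le)
  finally show ?thesis .
qed

text \<open>
  The density \<kappa> = |G|^-1 \<Sum>_A \<mu>(A) |A|^-2 is the Euler product of (1 - |P|^-2) over the primes
  P not dividing G, divided by |G|; its positivity is proved below by counting instead.
\<close>

definition sqfree_density :: real where
  "sqfree_density = (\<Sum>j. mobius_sum j / real CARD('a) ^ (2 * j)) / real CARD('a) ^ degree G"

lemma mobius_series_bounds:
  "summable (\<lambda>j. mobius_sum j / real CARD('a) ^ (2 * j))"
  "\<bar>(\<Sum>j. mobius_sum j / real CARD('a) ^ (2 * j)) - (\<Sum>j\<le>J. mobius_sum j / real CARD('a) ^ (2 * j))\<bar>
    \<le> 2 / real CARD('a) ^ Suc J"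
proof -
  have q: "2 \<le> real CARD('a)"
    using two_le_card_field[where 'a='a] by simp
  have "\<bar>mobius_sum j / real CARD('a) ^ (2 * j)\<bar> \<le> (1 / real CARD('a)) ^ j" for j
    using abs_mobius_sum_le[of j] q
    by (simp add: abs_divide power_mult power2_eq_square power_one_over divide_simps)
  from geometric_tail_bound[OF q this] show
    "summable (\<lambda>j. mobius_sum j / real CARD('a) ^ (2 * j))"
    "\<bar>(\<Sum>j. mobius_sum j / real CARD('a) ^ (2 * j)) - (\<Sum>j\<le>J. mobius_sum j / real CARD('a) ^ (2 * j))\<bar>
      \<le> 2 / real CARD('a) ^ Suc J" .
qed

lemma sqfree_class_approx:
  assumes "r \<in> unit_residues"
  shows "\<bar>real (card (sqfree_class N r)) - sqfree_density * real CARD('a) ^ N\<bar> \<le> 4 * real CARD('a) ^ (N div 2)"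
proof -
  define q where "q = real CARD('a)"
  have q: "2 \<le> q"
    using two_le_card_field[where 'a='a] by (simp add: q_def)
  define J where "J = N div 2"
  define s where "s = (\<Sum>j\<le>J. mobius_sum j / q ^ (2 * j))"
  have truncated: "\<bar>real (card (sqfree_class N r)) - q ^ N / q ^ degree G * s\<bar> \<le> 2 * q ^ J"
    using sqfree_class_truncated_approx[OF assms, of N] by (simp add: q_def s_def J_def)
  have "q ^ N / q ^ degree G * s - sqfree_density * q ^ N
      = q ^ N / q ^ degree G * (s - (\<Sum>j. mobius_sum j / q ^ (2 * j)))"
    by (simp add: sqfree_density_def q_def field_simps)
  then have "\<bar>q ^ N / q ^ degree G * s - sqfree_density * q ^ N\<bar>
      = q ^ N / q ^ degree G * \<bar>(\<Sum>j. mobius_sum j / q ^ (2 * j)) - s\<bar>"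
    using q by (simp add: abs_mult abs_minus_commute)
  also have "\<dots> \<le> q ^ N * (2 / q ^ Suc J)"
    using mobius_series_bounds(2)[of J] q
    by (intro mult_mono) (simp_all add: q_def s_def divide_le_eq)
  also have "\<dots> \<le> q ^ (Suc J + J) * (2 / q ^ Suc J)"
    using q by (intro mult_right_mono power_increasing) (auto simp: J_def)
  also have "\<dots> = 2 * q ^ J"
    using q by (simp add: power_add)
  finally show ?thesis
    using truncated unfolding q_def J_def by linarith
qed

lemma residue_class_subset_square_multiples:
  assumes "r \<in> unit_residues"
  shows "residue_class N r \<subseteq>
    (\<Union>j\<le>N div 2. \<Union>A\<in>monic_polys j. \<Union>r'\<in>unit_residues. (\<lambda>E. A ^ 2 * E) ` sqfree_class (N - 2 * j) r')"
proof
  fix D assume D: "D \<in> residue_class N r"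
  then have "lead_coeff D = 1"
    unfolding residue_class_def monic_polys_def by blast
  then obtain A E where AE: "lead_coeff A = 1" "lead_coeff E = 1" "squarefree E" "D = A ^ 2 * E"
    using monic_square_times_squarefree by blast
  then have "A ^ 2 * E \<in> monic_polys N"
    using D by (simp add: residue_class_def)
  then have j: "2 * degree A \<le> N" "E \<in> monic_polys (N - 2 * degree A)"
    using mult_mem_monic_polys_iff[of "A ^ 2" E N] monic_power[OF AE(1), of 2] by simp_all
  have "coprime D G"
    using D assms by (simp add: residue_class_def flip: mod_modulus_mem_unit_residues_iff)
  then have "E mod G \<in> unit_residues"
    using AE(4) coprime_divisors[of E D G G] by (simp add: mod_modulus_mem_unit_residues_iff)
  moreover have "E \<in> sqfree_class (N - 2 * degree A) (E mod G)"
    using j AE(3) by (simp add: sqfree_class_def residue_class_def)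
  moreover have "A \<in> monic_polys (degree A)" "degree A \<le> N div 2"
    using AE(1) j(1) by (simp_all add: mem_monic_polys_degree)
  ultimately show "D \<in> (\<Union>j\<le>N div 2. \<Union>A\<in>monic_polys j. \<Union>r'\<in>unit_residues.
      (\<lambda>E. A ^ 2 * E) ` sqfree_class (N - 2 * j) r')"
    using AE(4) by blast
qed

lemma card_residue_class_le_sqfree_sum:
  assumes "r \<in> unit_residues"
  shows "real (card (residue_class N r)) \<le>
    (\<Sum>j\<le>N div 2. real CARD('a) ^ j * (\<Sum>r'\<in>unit_residues. real (card (sqfree_class (N - 2 * j) r'))))"
proof -
  have "card (residue_class N r) \<le>
      card (\<Union>j\<le>N div 2. \<Union>A\<in>monic_polys j. \<Union>r'\<in>unit_residues. (\<lambda>E. A ^ 2 * E) ` sqfree_class (N - 2 * j) r')"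
    by (intro card_mono residue_class_subset_square_multiples[OF assms])
      (simp add: finite_monic_polys finite_unit_residues finite_sqfree_class)
  also have "\<dots> \<le> (\<Sum>j\<le>N div 2. \<Sum>A\<in>monic_polys j. \<Sum>r'\<in>unit_residues.
      card ((\<lambda>E. A ^ 2 * E) ` sqfree_class (N - 2 * j) r'))"
    by (intro order.trans[OF card_UN_le] sum_mono order.trans[OF card_UN_le])
      (simp_all add: finite_monic_polys finite_unit_residues card_UN_le)
  also have "\<dots> \<le> (\<Sum>j\<le>N div 2. \<Sum>A\<in>(monic_polys j :: 'a poly set). \<Sum>r'\<in>unit_residues.
      card (sqfree_class (N - 2 * j) r'))"
    by (intro sum_mono card_image_le finite_sqfree_class)
  also have "\<dots> = (\<Sum>j\<le>N div 2. CARD('a) ^ j * (\<Sum>r'\<in>unit_residues. card (sqfree_class (N - 2 * j) r')))"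
    by (simp add: card_monic_polys)
  finally show ?thesis
    by (simp flip: of_nat_sum of_nat_power of_nat_mult)
qed

lemma sqfree_classes_lower_bound:
  assumes "degree G \<le> M"
  shows "real CARD('a) ^ (2 * M - degree G) \<le>
    (\<Sum>j\<le>M. real CARD('a) ^ j * (\<Sum>r\<in>unit_residues. real (card (sqfree_class (2 * M - 2 * j) r))))"
proof -
  have "1 mod G \<in> unit_residues"
    by (simp add: mod_modulus_mem_unit_residues_iff)
  from card_residue_class_le_sqfree_sum[OF this, of "2 * M"] show ?thesis
    using assms by (simp add: card_residue_class)
qed

text \<open>
  If \<kappa> \<le> 0, every squarefree class of degree 2i has at most 4 q^i elements, so the
  factorisations A^2 E leave room for only O(M q^M) of the q^(2M - deg G) monic polynomials of
  degree 2M that are congruent to 1.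
\<close>

lemma sqfree_density_pos: "0 < sqfree_density"
proof (rule ccontr)
  assume "\<not> 0 < sqfree_density"
  define q where "q = real CARD('a)"
  have q: "2 \<le> q"
    using two_le_card_field[where 'a='a] by (simp add: q_def)
  have sqfree_small: "real (card (sqfree_class (2 * i) r)) \<le> 4 * q ^ i" if "r \<in> unit_residues" for i r
  proof -
    have "sqfree_density * q ^ (2 * i) \<le> 0"
      using \<open>\<not> 0 < sqfree_density\<close> q by (simp add: mult_nonpos_nonneg)
    with sqfree_class_approx[OF that, of "2 * i"] show ?thesis
      unfolding q_def by simp
  qed
  define U where "U = real (card unit_residues)"
  have "q ^ M \<le> 4 * U * q ^ degree G * (real M + 1)" if M: "degree G \<le> M" for M
  proof -
    have "q ^ (2 * M - degree G) \<le> (\<Sum>j\<le>M. q ^ j * (\<Sum>r\<in>unit_residues. 4 * q ^ (M - j)))"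
      using sqfree_classes_lower_bound[OF M, folded q_def]
      by (rule order.trans) (intro sum_mono mult_left_mono; use q in \<open>simp add: sqfree_small flip: diff_mult_distrib2\<close>)
    also have "\<dots> = (\<Sum>j\<le>M. 4 * U * q ^ M)"
    proof (rule sum.cong[OF refl])
      fix j assume "j \<in> {..M}"
      then have "q ^ j * q ^ (M - j) = q ^ M"
        by (simp flip: power_add)
      then show "q ^ j * (\<Sum>r\<in>unit_residues. 4 * q ^ (M - j)) = 4 * U * q ^ M"
        by (simp add: U_def algebra_simps)
    qed
    also have "\<dots> = (real M + 1) * (4 * U * q ^ M)"
      by simp
    finally have "q ^ (2 * M - degree G) * q ^ degree G \<le> (real M + 1) * (4 * U * q ^ M) * q ^ degree G"
      using q by (intro mult_right_mono) simp_all
    moreover have "q ^ (2 * M - degree G) * q ^ degree G = q ^ M * q ^ M"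
      using M by (simp flip: power_add) (simp add: mult_2)
    ultimately have "q ^ M * q ^ M \<le> q ^ M * (4 * U * q ^ degree G * (real M + 1))"
      by (simp add: algebra_simps)
    then show ?thesis
      using q by (simp add: mult_le_cancel_left_pos)
  qed
  moreover obtain M where "M \<ge> degree G" "4 * U * q ^ degree G * (real M + 1) < q ^ M"
    using q power_exceeds_linear[of q "degree G" "4 * U * q ^ degree G"] by auto
  ultimately show False
    by fastforce
qed

section \<open>Squarefree polynomials prime to a given prime\<close>

definition avoiding_class :: "'a poly \<Rightarrow> nat \<Rightarrow> 'a poly \<Rightarrow> 'a poly set" where
  "avoiding_class P N r = {D \<in> sqfree_class N r. \<not> P dvd D}"

lemma finite_avoiding_class: "finite (avoiding_class P N r)"
  unfolding avoiding_class_def using finite_sqfree_class by simp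

text \<open>
  With B an inverse of P modulo G, D' \<mapsto> P D' maps the squarefree polynomials prime to P in the
  class of B r onto the squarefree multiples of P in the class of r.
\<close>

lemma card_sqfree_class_split:
  assumes P: "fprime P" and B: "(B * P) mod G = 1 mod G" and r: "r \<in> polys_deg_lt (degree G)"
  shows "card (sqfree_class N r) = card (avoiding_class P N r) +
    (if degree P \<le> N then card (avoiding_class P (N - degree P) ((B * r) mod G)) else 0)"
proof -
  define X where "X = {D \<in> residue_class N r. P dvd D \<and> squarefree D}"
  have "sqfree_class N r = avoiding_class P N r \<union> X"
    by (auto simp: avoiding_class_def sqfree_class_def X_def)
  moreover have "avoiding_class P N r \<inter> X = {}"
    by (auto simp: avoiding_class_def X_def)
  moreover have "finite X"
    unfolding X_def using finite_residue_class by simp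
  ultimately have "card (sqfree_class N r) = card (avoiding_class P N r) + card X"
    by (simp add: card_Un_disjoint finite_avoiding_class)
  moreover have "card X = (if degree P \<le> N then card (avoiding_class P (N - degree P) ((B * r) mod G)) else 0)"
  proof (cases "degree P \<le> N")
    case True
    have "lead_coeff P = 1"
      using P by (simp add: fprime_def)
    from card_multiples_in_residue_class[OF this B r True, of squarefree]
    have "card X = card {E \<in> residue_class (N - degree P) ((B * r) mod G). squarefree (P * E)}"
      by (simp add: X_def)
    also have "{E \<in> residue_class (N - degree P) ((B * r) mod G). squarefree (P * E)} =
        avoiding_class P (N - degree P) ((B * r) mod G)"
      by (auto simp: avoiding_class_def sqfree_class_def squarefree_fprime_mult_iff[OF P])
    finally show ?thesis
      using True by simp
  next
    case False
    then have "X = {}"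
      using dvd_mem_residue_class(1) by (auto simp: X_def)
    with False show ?thesis
      by simp
  qed
  ultimately show ?thesis
    by simp
qed

lemma inverse_mod_imp_mod_mem_unit_residues:
  assumes "(B * P) mod G = 1 mod G" "r \<in> unit_residues"
  shows "(B * r) mod G \<in> unit_residues"
proof -
  have "coprime B G"
  proof (rule coprimeI)
    fix c assume "c dvd B" "c dvd G"
    then have "c dvd (B * P) mod G"
      by (simp add: dvd_mod_iff)
    with assms(1) \<open>c dvd G\<close> show "is_unit c"
      by (simp add: dvd_mod_iff)
  qed
  moreover have "coprime r G"
    using assms(2) by (simp add: unit_residues_def)
  ultimately show ?thesis
    by (simp add: mod_modulus_mem_unit_residues_iff poly_coprime_mult_left_iff)
qed

lemma sqfree_class_approx_sqrt:
  assumes "r \<in> unit_residues"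
  shows "\<bar>real (card (sqfree_class N r)) - sqfree_density * real CARD('a) ^ N\<bar> \<le> 4 * sqrt (real CARD('a)) ^ N"
  using sqfree_class_approx[OF assms, of N] power_half_le_sqrt_power[of "real CARD('a)" N] by simp

lemma avoiding_class_approx:
  assumes P: "fprime P" "\<not> P dvd G" and r: "r \<in> unit_residues"
  shows "\<bar>real (card (avoiding_class P N r)) -
      sqfree_density * (real (pnorm P) / (real (pnorm P) + 1)) * real CARD('a) ^ N\<bar>
    \<le> 4 * (4 + sqfree_density) * sqrt (real CARD('a)) ^ N"
proof -
  obtain u where u: "(u * P) mod G = 1 mod G"
    using P coprime_fprime_left_iff inverse_mod_exists by blast
  have "real (card (avoiding_class P N r)) = real (card (sqfree_class N r)) -
      (if degree P \<le> N then real (card (avoiding_class P (N - degree P) ((u * r) mod G))) else 0)"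
    if "r \<in> unit_residues" for N r
    using card_sqfree_class_split[OF P(1) u, of r N] that by (simp add: unit_residues_def)
  from alternating_recursion_approx[where S = "\<lambda>N r. real (card (sqfree_class N r))", OF _ sqfree_density_pos
      degree_fprime_pos[OF P(1)] inverse_mod_imp_mod_mem_unit_residues[OF u] sqfree_class_approx_sqrt this r]
  show ?thesis
    using two_le_card_field[where 'a='a] by (simp add: pnorm_def)
qed

lemma avoiding_ratio_approx:
  assumes P: "fprime P" "\<not> P dvd G" and R: "R \<subseteq> unit_residues"
    and nonempty: "0 < (\<Sum>r\<in>R. card (sqfree_class N r))"
  shows "\<bar>real (\<Sum>r\<in>R. card (avoiding_class P N r)) / real (\<Sum>r\<in>R. card (sqfree_class N r))
      - real (pnorm P) / (real (pnorm P) + 1)\<bar>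
    \<le> 16 * (4 + sqfree_density) / (sqfree_density * sqrt (real CARD('a)) ^ N)"
proof -
  define \<kappa> where "\<kappa> = sqfree_density"
  define y where "y = real (pnorm P) / (real (pnorm P) + 1)"
  define t where "t = sqrt (real CARD('a)) ^ N"
  define K where "K = 4 * (4 + \<kappa>)"
  have "0 < \<kappa>"
    unfolding \<kappa>_def by (rule sqfree_density_pos)
  then have "0 \<le> y" "y \<le> 1" "0 \<le> K" "4 * t \<le> K * t"
    using zero_le_power[of "sqrt (real CARD('a))" N] by (simp_all add: y_def K_def t_def)
  have "t ^ 2 = (sqrt (real CARD('a)) ^ 2) ^ N"
    unfolding t_def power_mult[symmetric] by (simp only: mult.commute)
  then have t: "1 \<le> t" "t ^ 2 = real CARD('a) ^ N"
    using two_le_card_field[where 'a='a] by (simp_all add: t_def one_le_power)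
  have "\<bar>real (card (sqfree_class N r)) - \<kappa> * t ^ 2\<bar> \<le> K * t" if "r \<in> R" for r
    using sqfree_class_approx_sqrt[of r N, folded \<kappa>_def t_def t(2)] that R \<open>4 * t \<le> K * t\<close> by auto
  then have a: "\<bar>real (\<Sum>r\<in>R. card (sqfree_class N r)) - real (card R) * \<kappa> * t ^ 2\<bar> \<le> real (card R) * K * t"
    using abs_sum_minus_const_le[of R "\<lambda>r. real (card (sqfree_class N r))"] by (simp add: mult.assoc)
  have "\<bar>real (card (avoiding_class P N r)) - y * \<kappa> * t ^ 2\<bar> \<le> K * t" if "r \<in> R" for r
    using avoiding_class_approx[OF P, of r N, folded \<kappa>_def, folded y_def K_def t_def t(2)] that R
    by (auto simp: ac_simps)
  then have b: "\<bar>real (\<Sum>r\<in>R. card (avoiding_class P N r)) - real (card R) * y * \<kappa> * t ^ 2\<bar> \<le> real (card R) * K * t"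
    using abs_sum_minus_const_le[of R "\<lambda>r. real (card (avoiding_class P N r))"] by (simp add: mult.assoc)
  have "(\<Sum>r\<in>R. card (avoiding_class P N r)) \<le> (\<Sum>r\<in>R. card (sqfree_class N r))"
    by (intro sum_mono card_mono finite_sqfree_class) (auto simp: avoiding_class_def)
  then have le: "real (\<Sum>r\<in>R. card (avoiding_class P N r)) \<le> real (\<Sum>r\<in>R. card (sqfree_class N r))"
    by (simp only: of_nat_le_iff)
  from ratio_approx[OF of_nat_0_le_iff le _ \<open>0 \<le> y\<close> \<open>y \<le> 1\<close> \<open>0 < \<kappa>\<close> t(1) of_nat_0_le_iff \<open>0 \<le> K\<close> a b]
    nonempty
  have "\<bar>real (\<Sum>r\<in>R. card (avoiding_class P N r)) / real (\<Sum>r\<in>R. card (sqfree_class N r)) - y\<bar>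
      \<le> 4 * K / (\<kappa> * t)"
    by (simp only: of_nat_0_less_iff)
  then show ?thesis
    unfolding \<kappa>_def y_def K_def t_def by (simp add: algebra_simps)
qed

lemma HN_mod_eq_sqfree_class:
  assumes "r \<in> unit_residues"
  shows "{D \<in> HN N G. D mod G = r} = sqfree_class N r"
  using assms by (auto simp: HN_def sqfree_class_def residue_class_def monic_polys_def
      simp flip: mod_modulus_mem_unit_residues_iff)

lemma HN_mult_mod_eq_avoiding_class:
  assumes "fprime P" "r \<in> unit_residues"
  shows "{D \<in> HN N (P * G). D mod G = r} = avoiding_class P N r"
proof -
  have "coprime D P \<longleftrightarrow> \<not> P dvd D" for D
    using coprime_fprime_left_iff[OF assms(1)] by (simp add: coprime_commute)
  with assms(2) show ?thesis
    by (auto simp: HN_def avoiding_class_def sqfree_class_def residue_class_def monic_polys_def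
        poly_coprime_mult_right_iff simp flip: mod_modulus_mem_unit_residues_iff)
qed

lemma HN_ratio_approx:
  assumes P: "fprime P" "\<not> P dvd G" and R: "R \<subseteq> unit_residues"
    and nonempty: "{D \<in> HN N G. D mod G \<in> R} \<noteq> {}"
  shows "\<bar>real (card {D \<in> HN N (P * G). D mod G \<in> R}) / real (card {D \<in> HN N G. D mod G \<in> R})
      - real (pnorm P) / (real (pnorm P) + 1)\<bar>
    \<le> 16 * (4 + sqfree_density) / sqfree_density * real CARD('a) powr (- real N / 2)"
proof -
  have "finite R"
    using R finite_unit_residues by (rule finite_subset)
  then have card_eqs: "card {D \<in> HN N G. D mod G \<in> R} = (\<Sum>r\<in>R. card (sqfree_class N r))"
      "card {D \<in> HN N (P * G). D mod G \<in> R} = (\<Sum>r\<in>R. card (avoiding_class P N r))"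
    using R HN_mod_eq_sqfree_class HN_mult_mod_eq_avoiding_class[OF P(1)]
    by (simp_all add: card_filter_eq_sum_fibres finite_HN subset_iff)
  moreover have "0 < card {D \<in> HN N G. D mod G \<in> R}"
    using nonempty finite_HN[of N G] by (simp add: card_gt_0_iff)
  ultimately have "\<bar>real (card {D \<in> HN N (P * G). D mod G \<in> R}) / real (card {D \<in> HN N G. D mod G \<in> R})
      - real (pnorm P) / (real (pnorm P) + 1)\<bar>
    \<le> 16 * (4 + sqfree_density) / (sqfree_density * sqrt (real CARD('a)) ^ N)"
    using avoiding_ratio_approx[OF P R] by simp
  also have "\<dots> = 16 * (4 + sqfree_density) / sqfree_density * (1 / sqrt (real CARD('a)) ^ N)"
    by simp
  also have "1 / sqrt (real CARD('a)) ^ N = real CARD('a) powr (- real N / 2)"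
    by (simp add: inverse_sqrt_power_eq_powr)
  finally show ?thesis .
qed

end

section \<open>The families of quadratic twists\<close>

lemma HN_cong:
  fixes H H' :: "'a::field poly"
  assumes "\<And>Q. fprime Q \<Longrightarrow> Q dvd H \<longleftrightarrow> Q dvd H'"
  shows "HN N H = HN N H'"
  using assms by (simp add: HN_def coprime_iff_no_fprime_divisor)

lemma qr_symbol_cong:
  assumes "P dvd D - D'"
  shows "qr_symbol D P = qr_symbol D' P"
proof -
  have "P dvd D \<longleftrightarrow> P dvd D'"
    using dvd_add_right_iff[OF assms, of D'] by simp
  moreover have "P dvd x ^ 2 - D \<longleftrightarrow> P dvd x ^ 2 - D'" for x
  proof -
    have "x ^ 2 - D' = (D - D') + (x ^ 2 - D)"
      by simp
    then show ?thesis
      using dvd_add_right_iff[OF assms, of "x ^ 2 - D"] by simp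
  qed
  ultimately show ?thesis
    by (simp add: qr_symbol_def)
qed

lemma chiM_mod:
  fixes G :: "'a::field poly"
  assumes "\<And>P. P \<in> mult_primes A B \<Longrightarrow> P dvd G"
  shows "chiM A B (D mod G) = chiM A B D"
  unfolding chiM_def
proof (rule prod.cong[OF refl])
  fix P assume "P \<in> mult_primes A B"
  moreover have "D mod G - D = - (D div G * G)"
    by (subst minus_div_mult_eq_mod[of D G, symmetric]) simp
  ultimately have "P dvd D mod G - D"
    using assms by simp
  then show "qr_symbol (D mod G) P = qr_symbol D P"
    by (rule qr_symbol_cong)
qed

lemma HNs_mult_dvd:
  fixes P H :: "'a::field poly"
  assumes "fprime P" "P dvd H"
  shows "HNs A B s N (P * H) = HNs A B s N H"
proof -
  have "HN N (P * H) = HN N H"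
    using assms by (intro HN_cong) (auto simp: fprime_dvd_mult_iff intro: dvd_trans)
  then show ?thesis
    by (simp add: HNs_def)
qed

lemma (in monic_modulus) HNs_eq_filter:
  assumes "\<And>Q. fprime Q \<Longrightarrow> Q dvd G \<longleftrightarrow> Q dvd disc A B"
  shows "HNs A B s N (H * disc A B) = {D \<in> HN N (H * G). D mod G \<in> {r \<in> unit_residues. chiM A B r = s}}"
proof -
  have "HN N (H * disc A B) = HN N (H * G)"
    using assms by (intro HN_cong) (simp add: fprime_dvd_mult_iff)
  moreover have "chiM A B (D mod G) = chiM A B D" for D
    using assms by (intro chiM_mod) (simp add: mult_primes_def)
  moreover have "D mod G \<in> unit_residues" if "D \<in> HN N (H * G)" for D
    using that by (simp add: HN_def poly_coprime_mult_right_iff mod_modulus_mem_unit_residues_iff)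
  ultimately show ?thesis
    by (auto simp: HNs_def)
qed

theorem proposition3p3:
  fixes A B :: "'a::{finite,field} poly"
  assumes q: "CARD('a) mod 6 = 1"
    and char: "CHAR('a) \<noteq> 2" "CHAR('a) \<noteq> 3"
    and ell: "disc A B \<noteq> 0"
    and minimal: "minimal_weierstrass A B"
  shows "\<exists>C::real. \<forall>N P s.
     fprime P \<longrightarrow> s \<in> {1, -1} \<longrightarrow> HNs A B s N (disc A B) \<noteq> {} \<longrightarrow>
     (\<not> P dvd disc A B \<longrightarrow>
        \<bar>real (card (HNs A B s N (P * disc A B))) / real (card (HNs A B s N (disc A B)))
          - real (pnorm P) / (real (pnorm P) + 1)\<bar>
        \<le> C * real CARD('a) powr (- real N / 2)) \<and>
     (P dvd disc A B \<longrightarrow>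
        real (card (HNs A B s N (P * disc A B))) / real (card (HNs A B s N (disc A B))) = 1)"
proof -
  define G where "G = smult (inverse (lead_coeff (disc A B))) (disc A B)"
  interpret monic_modulus G
    by standard (use ell in \<open>simp add: G_def\<close>)
  define C where "C = 16 * (4 + sqfree_density) / sqfree_density"
  have dvd_G: "Q dvd G \<longleftrightarrow> Q dvd disc A B" for Q
    using ell by (simp add: G_def dvd_smult_iff)
  note HNs = HNs_eq_filter[OF dvd_G, of _ _ 1, unfolded mult_1] HNs_eq_filter[OF dvd_G]
  have "\<bar>real (card (HNs A B s N (P * disc A B))) / real (card (HNs A B s N (disc A B)))
      - real (pnorm P) / (real (pnorm P) + 1)\<bar> \<le> C * real CARD('a) powr (- real N / 2)"
    if "fprime P" "\<not> P dvd disc A B" "HNs A B s N (disc A B) \<noteq> {}" for N P s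
    using that(3) unfolding HNs C_def
    by (intro HN_ratio_approx that(1)) (auto simp: dvd_G that(2))
  moreover have "real (card (HNs A B s N (P * disc A B))) / real (card (HNs A B s N (disc A B))) = 1"
    if "fprime P" "P dvd disc A B" "HNs A B s N (disc A B) \<noteq> {}" for N P s
    using HNs_mult_dvd[OF that(1,2)] that(3) finite_HN[of N "disc A B"] by (simp add: HNs_def card_gt_0_iff)
  ultimately show ?thesis
    by blast
qed

end
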